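(* Let $(H,e)$ be a unital Hilbert space, $X=S(\mathfrak c_e)=\{\overline{\eta_0+e}:\eta_0\in H^e_h,\|\eta_0\|\le1\}\subseteq\overline H$ equipped with the weak$^*$ topology (a compact Hausdorff space), and let $\mu$ be a unital measure on $X$. Let $\iota:H\to L^2(X,\mu)$ be $\iota(\zeta)(t)=\langle\zeta,t\rangle$, and let $P$ be the orthogonal projection of $L^2(X,\mu)$ onto the closure of $\iota(H)$. Then $\iota$ is a Hilbert–Schmidt operator with $\|\iota\|_2\le\sqrt2$, $\iota(e)=1$, $\iota(\zeta^* )=\overline{\iota(\zeta)}$, $\iota(\{\zeta_0\in H^e_h:\|\zeta_0\|\le1\})\subseteq\{\eta\in L^2(X,\mu)_h: \eta\perp1,\|\eta\|_2\le1\}$, and $\iota(\mathfrak c_e)\subseteq L^2(X,\mu)_+$; $P$ is a unital positive projection; and the Hilbert space adjoint $\iota^*:L^2(X,\mu)\to H$ is a unital positive map, i.e. $\iota^*(1)=e$ and $\iota^*(L^2(X,\mu)_+)\subseteq\mathfrak c_e$.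
   Context: A Hilbert $*$-space is a complex Hilbert space (inner product linear in the first variable) with a conjugate-linear $\zeta\mapsto\zeta^*$, $\zeta^{**}=\zeta$, $(\zeta^*,\eta^* )=\overline{(\zeta,\eta)}$. A unital Hilbert space $(H,e)$ has a fixed hermitian unit vector $e$; $H^e=\{e\}^\perp$, $H^e_h$ its hermitian part; cone $\mathfrak c_e=\{\zeta\in H_h:\|\zeta\|\le\sqrt2(\zeta,e)\}$. $\overline H$ is the conjugate Hilbert space, paired with $H$ by $\langle\zeta,\bar\eta\rangle=(\zeta,\eta)$; $X$ is the set of states of $\mathfrak c_e$ (linear functionals $\sigma$ with $\sigma(e)=1$, $\sigma(\mathfrak c_e)\ge0$), all of which have the displayed form. A unital measure on $X$ is a probability Radon measure $\mu$ on $X$ with $\int_X\langle\zeta,t\rangle\,d\mu(t)=(\zeta,e)$ for all $\zeta\in H$. $L^2(X,\mu)$ is a unital Hilbert space with involution complex conjugation and unit $1$, with cone $L^2(X,\mu)_+=\{\eta\text{ real}:\|\eta-\int\eta\,d\mu\|_2\le\int\eta\,d\mu\}$. A linear map between unital Hilbert spaces is unital positive if it maps unit to unit and cone into cone. *)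

theory Defs
  imports "HOL-Analysis.Analysis" "HOL-Probability.Probability"
begin

definition hnorm :: "('h \<Rightarrow> 'h \<Rightarrow> complex) \<Rightarrow> 'h \<Rightarrow> real" where
  "hnorm ip x = sqrt (Re (ip x x))"

definition complex_hilbert_space ::
  "(complex \<Rightarrow> 'h::ab_group_add \<Rightarrow> 'h) \<Rightarrow> ('h \<Rightarrow> 'h \<Rightarrow> complex) \<Rightarrow> bool" where
  "complex_hilbert_space sc ip \<longleftrightarrow>
     (\<forall>x. sc 1 x = x) \<and>
     (\<forall>a b x. sc a (sc b x) = sc (a * b) x) \<and>
     (\<forall>a x y. sc a (x + y) = sc a x + sc a y) \<and>
     (\<forall>a b x. sc (a + b) x = sc a x + sc b x) \<and>
     (\<forall>x y z. ip (x + y) z = ip x z + ip y z) \<and>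
     (\<forall>a x y. ip (sc a x) y = a * ip x y) \<and>
     (\<forall>x y. ip y x = cnj (ip x y)) \<and>
     (\<forall>x. Im (ip x x) = 0 \<and> 0 \<le> Re (ip x x)) \<and>
     (\<forall>x. ip x x = 0 \<longrightarrow> x = 0) \<and>
     (\<forall>s::nat \<Rightarrow> 'h. (\<forall>\<epsilon>>0. \<exists>N. \<forall>m\<ge>N. \<forall>n\<ge>N. hnorm ip (s m - s n) < \<epsilon>) \<longrightarrow>
        (\<exists>l. (\<lambda>n. hnorm ip (s n - l)) \<longlonglongrightarrow> 0))"

definition hilbert_star_space ::
  "(complex \<Rightarrow> 'h::ab_group_add \<Rightarrow> 'h) \<Rightarrow> ('h \<Rightarrow> 'h \<Rightarrow> complex) \<Rightarrow> ('h \<Rightarrow> 'h) \<Rightarrow> bool" where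
  "hilbert_star_space sc ip star \<longleftrightarrow>
     complex_hilbert_space sc ip \<and>
     (\<forall>x y. star (x + y) = star x + star y) \<and>
     (\<forall>a x. star (sc a x) = sc (cnj a) (star x)) \<and>
     (\<forall>x. star (star x) = x) \<and>
     (\<forall>x y. ip (star x) (star y) = cnj (ip x y))"

definition unital_hilbert_space ::
  "(complex \<Rightarrow> 'h::ab_group_add \<Rightarrow> 'h) \<Rightarrow> ('h \<Rightarrow> 'h \<Rightarrow> complex) \<Rightarrow> ('h \<Rightarrow> 'h) \<Rightarrow> 'h \<Rightarrow> bool" where
  "unital_hilbert_space sc ip star e \<longleftrightarrow>
     hilbert_star_space sc ip star \<and> star e = e \<and> hnorm ip e = 1"

definition herm_perp :: "('h \<Rightarrow> 'h \<Rightarrow> complex) \<Rightarrow> ('h \<Rightarrow> 'h) \<Rightarrow> 'h \<Rightarrow> 'h set" where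
  "herm_perp ip star e = {x. ip x e = 0 \<and> star x = x}"

definition cone_e :: "('h \<Rightarrow> 'h \<Rightarrow> complex) \<Rightarrow> ('h \<Rightarrow> 'h) \<Rightarrow> 'h \<Rightarrow> 'h set" where
  "cone_e ip star e = {z. star z = z \<and> hnorm ip z \<le> sqrt 2 * Re (ip z e)}"

text \<open>A state is the conjugate vector of an element
eta0 + e with eta0 in the unit ball of the hermitian part of e-perp; we represent the
point of the conjugate space by the vector eta0 + e itself, so that the pairing is
ip zeta t.\<close>

definition state_space :: "('h::ab_group_add \<Rightarrow> 'h \<Rightarrow> complex) \<Rightarrow> ('h \<Rightarrow> 'h) \<Rightarrow> 'h \<Rightarrow> 'h set" where
  "state_space ip star e = {\<eta>0 + e | \<eta>0. \<eta>0 \<in> herm_perp ip star e \<and> hnorm ip \<eta>0 \<le> 1}"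

definition weak_star_top :: "('h::ab_group_add \<Rightarrow> 'h \<Rightarrow> complex) \<Rightarrow> ('h \<Rightarrow> 'h) \<Rightarrow> 'h \<Rightarrow> 'h topology" where
  "weak_star_top ip star e =
     topology_generated_by {{t \<in> state_space ip star e. ip \<zeta> t \<in> U} | \<zeta> U. open U}"

definition unital_measure ::
  "('h::ab_group_add \<Rightarrow> 'h \<Rightarrow> complex) \<Rightarrow> ('h \<Rightarrow> 'h) \<Rightarrow> 'h \<Rightarrow> 'h measure \<Rightarrow> bool" where
  "unital_measure ip star e \<mu> \<longleftrightarrow>
     prob_space \<mu> \<and>
     space \<mu> = state_space ip star e \<and>
     sets \<mu> = sigma_sets (state_space ip star e) {U. openin (weak_star_top ip star e) U} \<and>
     (\<forall>A \<in> sets \<mu>. emeasure \<mu> A =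
        (SUP K \<in> {K. compactin (weak_star_top ip star e) K \<and> K \<subseteq> A}. emeasure \<mu> K)) \<and>
     (\<forall>\<zeta>. integrable \<mu> (\<lambda>t. ip \<zeta> t) \<and> (\<integral>t. ip \<zeta> t \<partial>\<mu>) = ip \<zeta> e)"

section \<open>L^2(X,mu) (complex-valued), elements considered up to a.e. equality\<close>

definition L2 :: "'a measure \<Rightarrow> ('a \<Rightarrow> complex) set" where
  "L2 \<mu> = {f. f \<in> borel_measurable \<mu> \<and> integrable \<mu> (\<lambda>t. (cmod (f t))\<^sup>2)}"

definition L2inner :: "'a measure \<Rightarrow> ('a \<Rightarrow> complex) \<Rightarrow> ('a \<Rightarrow> complex) \<Rightarrow> complex" where
  "L2inner \<mu> f g = (\<integral>t. f t * cnj (g t) \<partial>\<mu>)"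

definition L2norm :: "'a measure \<Rightarrow> ('a \<Rightarrow> complex) \<Rightarrow> real" where
  "L2norm \<mu> f = sqrt (\<integral>t. (cmod (f t))\<^sup>2 \<partial>\<mu>)"

text \<open>Cone L^2_+ = {eta real : ||eta - int eta||_2 <= int eta}; for real eta the integral is real.\<close>

definition L2pos :: "'a measure \<Rightarrow> ('a \<Rightarrow> complex) set" where
  "L2pos \<mu> = {\<eta> \<in> L2 \<mu>. (AE t in \<mu>. Im (\<eta> t) = 0) \<and>
       L2norm \<mu> (\<lambda>t. \<eta> t - (\<integral>s. \<eta> s \<partial>\<mu>)) \<le> Re (\<integral>s. \<eta> s \<partial>\<mu>)}"

definition iota :: "('h \<Rightarrow> 'h \<Rightarrow> complex) \<Rightarrow> 'h \<Rightarrow> 'h \<Rightarrow> complex" where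
  "iota ip \<zeta> = (\<lambda>t. ip \<zeta> t)"

definition orthonormal_basis :: "('h::ab_group_add \<Rightarrow> 'h \<Rightarrow> complex) \<Rightarrow> 'h set \<Rightarrow> bool" where
  "orthonormal_basis ip B \<longleftrightarrow>
     (\<forall>b\<in>B. \<forall>c\<in>B. ip b c = (if b = c then 1 else 0)) \<and>
     (\<forall>x. (\<forall>b\<in>B. ip x b = 0) \<longrightarrow> x = 0)"

text \<open>Hilbert--Schmidt with Hilbert--Schmidt norm at most c:
for an orthonormal basis B the sum of ||T b||^2 converges and is at most c^2
(this is independent of the basis).\<close>

definition hilbert_schmidt_le ::
  "('h::ab_group_add \<Rightarrow> 'h \<Rightarrow> complex) \<Rightarrow> 'a measure \<Rightarrow> ('h \<Rightarrow> 'a \<Rightarrow> complex) \<Rightarrow> real \<Rightarrow> bool" where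
  "hilbert_schmidt_le ip \<mu> T c \<longleftrightarrow>
     (\<forall>B. orthonormal_basis ip B \<longrightarrow>
        (\<lambda>b. (L2norm \<mu> (T b))\<^sup>2) summable_on B \<and> (\<Sum>\<^sub>\<infinity>b\<in>B. (L2norm \<mu> (T b))\<^sup>2) \<le> c\<^sup>2)"

definition iota_range_closure ::
  "('h \<Rightarrow> 'h \<Rightarrow> complex) \<Rightarrow> 'h measure \<Rightarrow> ('h \<Rightarrow> complex) set" where
  "iota_range_closure ip \<mu> =
     {g \<in> L2 \<mu>. \<forall>\<epsilon>>0. \<exists>\<zeta>. L2norm \<mu> (\<lambda>t. g t - iota ip \<zeta> t) < \<epsilon>}"

text \<open>g is (a representative of) P f, the orthogonal projection of f onto the closure
of iota(H): g lies in that closure and f - g is orthogonal to iota(H)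
(equivalently to its closure).\<close>

definition is_P_image ::
  "('h \<Rightarrow> 'h \<Rightarrow> complex) \<Rightarrow> 'h measure \<Rightarrow> ('h \<Rightarrow> complex) \<Rightarrow> ('h \<Rightarrow> complex) \<Rightarrow> bool" where
  "is_P_image ip \<mu> f g \<longleftrightarrow>
     g \<in> iota_range_closure ip \<mu> \<and> (\<forall>\<zeta>. L2inner \<mu> (\<lambda>t. f t - g t) (iota ip \<zeta>) = 0)"

definition is_iota_adj ::
  "('h \<Rightarrow> 'h \<Rightarrow> complex) \<Rightarrow> 'h measure \<Rightarrow> ('h \<Rightarrow> complex) \<Rightarrow> 'h \<Rightarrow> bool" where
  "is_iota_adj ip \<mu> g \<zeta> \<longleftrightarrow> (\<forall>\<xi>. ip \<zeta> \<xi> = L2inner \<mu> g (iota ip \<xi>))"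

end

theory Submission
  imports Defs
begin

text \<open>
  Every state \<open>t = \<eta>0 + e\<close> has norm at most \<open>\<surd>2\<close>, so \<open>\<bar>(\<zeta>, t)\<bar> \<le> \<surd>2 \<parallel>\<zeta>\<parallel>\<close> and
  \<open>\<iota>\<close> lands in \<open>L\<^sup>2\<close>; Bessel's inequality at each \<open>t\<close> gives the Hilbert--Schmidt bound.
  Writing a hermitian \<open>\<zeta>\<close> as \<open>c e + \<zeta>0\<close> with \<open>\<zeta>0 \<perp> e\<close>, \<open>\<iota> \<zeta> = c + \<iota> \<zeta>0\<close>, where
  \<open>\<iota> \<zeta>0\<close> has mean zero and norm at most \<open>\<parallel>\<zeta>0\<parallel>\<close>; this turns the cone condition on \<open>\<zeta>\<close>
  into the one defining \<open>L\<^sup>2\<^sub>+\<close>.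

  The projection \<open>P\<close> is the nearest-point map onto the closure of \<open>\<iota>(H)\<close>; it exists by the
  parallelogram law and the completeness of \<open>L\<^sup>2\<close> (Riesz--Fischer). Since the constants and
  the conjugates of elements of \<open>\<iota>(H)\<close> lie in \<open>\<iota>(H)\<close>, \<open>P\<close> fixes \<open>1\<close>, commutes with
  conjugation and preserves the mean, and Pythagoras shows \<open>P(L\<^sup>2\<^sub>+) \<subseteq> L\<^sup>2\<^sub>+\<close>.

  The adjoint \<open>\<iota>\<^sup>*\<close> comes from the Riesz representation theorem, proved by minimising
  \<open>\<parallel>x\<parallel>\<^sup>2 - 2 Re \<psi> x\<close>. For \<open>g \<in> L\<^sup>2\<^sub>+\<close> with mean \<open>c\<close>, \<open>\<iota>\<^sup>* g = c e + \<zeta>0\<close> is hermitian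
  and \<open>\<parallel>\<zeta>0\<parallel>\<^sup>2 = \<langle>g - c, \<iota> \<zeta>0\<rangle> \<le> \<parallel>g - c\<parallel> \<parallel>\<zeta>0\<parallel> \<le> c \<parallel>\<zeta>0\<parallel>\<close>, so \<open>\<iota>\<^sup>* g \<in> c\<^sub>e\<close>.
\<close>

lemma tendsto_of_norm_diff_le:
  fixes a :: "nat \<Rightarrow> 'b::real_normed_vector"
  assumes "\<And>n. norm (a n - l) \<le> b n" and "b \<longlonglongrightarrow> 0"
  shows "a \<longlonglongrightarrow> l"
proof -
  have "(\<lambda>n. a n - l) \<longlonglongrightarrow> 0"
    by (rule Lim_null_comparison[OF always_eventually assms(2)]) (use assms(1) in blast)
  then show ?thesis using Lim_null by blast
qed

lemma cnj_mult_self: "cnj z * z = (complex_of_real (cmod z))\<^sup>2"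
  and mult_cnj_self: "z * cnj z = (complex_of_real (cmod z))\<^sup>2"
  using complex_norm_square[of z] by (simp_all add: mult.commute)

lemma cmod_square_le_of_quadratic_nonneg:
  fixes c :: complex and A B :: real
  assumes nonneg: "\<And>s. 0 \<le> A - 2 * Re (cnj s * c) + (cmod s)\<^sup>2 * B" and B: "0 \<le> B"
  shows "(cmod c)\<^sup>2 \<le> A * B"
proof (cases "B = 0")
  case True
  have quadratic: "0 \<le> A - 2 * r * (cmod c)\<^sup>2" for r
    using nonneg[of "complex_of_real r * c"] True unfolding cmod_power2
    by (simp add: algebra_simps power2_eq_square)
  have "cmod c = 0"
  proof (rule ccontr)
    assume "cmod c \<noteq> 0"
    then have "2 * ((A + 1) / (cmod c)\<^sup>2) * (cmod c)\<^sup>2 = 2 * A + 2" by (simp add: field_simps)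
    then show False using quadratic[of "(A + 1) / (cmod c)\<^sup>2"] quadratic[of 0] by linarith
  qed
  then show ?thesis using True by simp
next
  case False
  with B have B: "B > 0" by simp
  define s where "s = c / complex_of_real B"
  have re: "Re (cnj s * c) = (cmod c)\<^sup>2 / B"
    unfolding s_def cmod_power2 by (simp add: power2_eq_square field_simps)
  have norm: "(cmod s)\<^sup>2 * B = (cmod c)\<^sup>2 / B"
    unfolding s_def using B by (simp add: norm_divide power_divide power2_eq_square)
  have "0 \<le> A - 2 * Re (cnj s * c) + (cmod s)\<^sup>2 * B" by (rule nonneg)
  then have "0 \<le> A - (cmod c)\<^sup>2 / B" unfolding re norm by simp
  then show ?thesis using B by (simp add: field_simps)
qed

lemma first_variation_eq_0:
  fixes a :: complex
  assumes "\<And>s. 0 \<le> - 2 * Re (cnj s * a) + (cmod s)\<^sup>2 * B" and "0 \<le> B"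
  shows "a = 0"
  using cmod_square_le_of_quadratic_nonneg[of 0 a B] assms by simp


section \<open>Complex Hilbert spaces\<close>

locale complex_hilbert =
  fixes sc :: "complex \<Rightarrow> 'h::ab_group_add \<Rightarrow> 'h" and ip :: "'h \<Rightarrow> 'h \<Rightarrow> complex"
  assumes complex_hilbert: "complex_hilbert_space sc ip"
begin

lemma sc_one: "sc 1 x = x"
  and sc_add_left: "sc (a + b) x = sc a x + sc b x"
  and ip_add_left: "ip (x + y) z = ip x z + ip y z"
  and ip_scale_left: "ip (sc a x) y = a * ip x y"
  and ip_commute: "ip y x = cnj (ip x y)"
  and Im_ip_self: "Im (ip x x) = 0"
  and Re_ip_self_nonneg: "0 \<le> Re (ip x x)"
  and ip_self_eq_0D: "ip x x = 0 \<Longrightarrow> x = 0"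
  using complex_hilbert unfolding complex_hilbert_space_def by - (meson+)

lemma hilbert_complete:
  assumes "\<And>\<epsilon>. \<epsilon> > 0 \<Longrightarrow> \<exists>N. \<forall>m\<ge>N. \<forall>n\<ge>N. hnorm ip (s m - s n) < \<epsilon>"
  obtains l where "(\<lambda>n. hnorm ip (s n - l)) \<longlonglongrightarrow> 0"
  using complex_hilbert assms unfolding complex_hilbert_space_def by meson

lemma ip_zero_left [simp]: "ip 0 y = 0"
  using ip_add_left[of 0 0 y] by simp

lemma ip_minus_left: "ip (- x) y = - ip x y"
  using ip_add_left[of x "- x" y] by (metis add.right_inverse ip_zero_left neg_eq_iff_add_eq_0)

lemma ip_diff_left: "ip (x - y) z = ip x z - ip y z"
  using ip_add_left[of x "- y" z] ip_minus_left[of y z] by simp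

lemma ip_add_right: "ip x (y + z) = ip x y + ip x z"
  by (metis complex_cnj_add ip_add_left ip_commute)

lemma ip_scale_right: "ip x (sc a y) = cnj a * ip x y"
  by (metis complex_cnj_mult ip_scale_left ip_commute)

lemma ip_zero_right [simp]: "ip x 0 = 0"
  by (metis complex_cnj_zero ip_commute ip_zero_left)

lemma ip_minus_right: "ip x (- y) = - ip x y"
  by (metis complex_cnj_minus ip_minus_left ip_commute)

lemma ip_diff_right: "ip x (y - z) = ip x y - ip x z"
  by (metis complex_cnj_diff ip_diff_left ip_commute)

lemma ip_sum_left: "ip (sum f F) y = (\<Sum>b\<in>F. ip (f b) y)"
  by (induction F rule: infinite_finite_induct) (auto simp: ip_add_left)

lemma ip_sum_right: "ip y (sum f F) = (\<Sum>b\<in>F. ip y (f b))"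
  by (induction F rule: infinite_finite_induct) (auto simp: ip_add_right)

lemma sc_minus_one: "sc (- 1) x = - x"
proof -
  have "sc (- 1) x + x = 0" using sc_add_left[of "- 1" 1 x] sc_add_left[of 0 0 x] sc_one by simp
  then show ?thesis by (simp add: eq_neg_iff_add_eq_0)
qed

lemma hnorm_nonneg: "0 \<le> hnorm ip x"
  unfolding hnorm_def using Re_ip_self_nonneg by simp

lemma hnorm_square: "(hnorm ip x)\<^sup>2 = Re (ip x x)"
  unfolding hnorm_def using Re_ip_self_nonneg by simp

lemma ip_self_eq_hnorm_square: "ip x x = complex_of_real ((hnorm ip x)\<^sup>2)"
  using Im_ip_self[of x] by (simp add: hnorm_square complex_eq_iff)

lemma hnorm_zero [simp]: "hnorm ip 0 = 0"
  unfolding hnorm_def by simp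

lemma hnorm_sc: "hnorm ip (sc a x) = cmod a * hnorm ip x"
proof -
  have "ip (sc a x) (sc a x) = (a * cnj a) * ip x x"
    by (simp add: ip_scale_left ip_scale_right)
  also have "a * cnj a = complex_of_real ((cmod a)\<^sup>2)"
    by (rule complex_norm_square[symmetric])
  finally show ?thesis unfolding hnorm_def by (simp add: real_sqrt_mult)
qed

lemma hnorm_add_square:
  "(hnorm ip (x + y))\<^sup>2 = (hnorm ip x)\<^sup>2 + (hnorm ip y)\<^sup>2 + 2 * Re (ip x y)"
proof -
  have "ip (x + y) (x + y) = ip x x + ip y y + (ip x y + cnj (ip x y))"
    by (simp add: ip_add_left ip_add_right ip_commute[of x y])
  then show ?thesis by (simp add: hnorm_square)
qed

lemma hnorm_diff_square:
  "(hnorm ip (x - y))\<^sup>2 = (hnorm ip x)\<^sup>2 + (hnorm ip y)\<^sup>2 - 2 * Re (ip x y)"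
proof -
  have "ip (x - y) (x - y) = ip x x + ip y y - (ip x y + cnj (ip x y))"
    by (simp add: ip_diff_left ip_diff_right ip_commute[of x y])
  then show ?thesis by (simp add: hnorm_square)
qed

lemma hnorm_parallelogram:
  "(hnorm ip (x - y))\<^sup>2 + (hnorm ip (x + y))\<^sup>2 = 2 * (hnorm ip x)\<^sup>2 + 2 * (hnorm ip y)\<^sup>2"
  using hnorm_add_square[of x y] hnorm_diff_square[of x y] by simp

lemma hnorm_diff_scale_square:
  "(hnorm ip (x - sc s y))\<^sup>2 = (hnorm ip x)\<^sup>2 - 2 * Re (cnj s * ip x y) + (cmod s)\<^sup>2 * (hnorm ip y)\<^sup>2"
  by (simp add: hnorm_diff_square hnorm_sc ip_scale_right power_mult_distrib)

lemma ip_Cauchy_Schwarz: "cmod (ip x y) \<le> hnorm ip x * hnorm ip y"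
proof -
  have "(cmod (ip x y))\<^sup>2 \<le> (hnorm ip x)\<^sup>2 * (hnorm ip y)\<^sup>2"
    by (rule cmod_square_le_of_quadratic_nonneg) (metis hnorm_diff_scale_square zero_le_power2, simp)
  then have "(cmod (ip x y))\<^sup>2 \<le> (hnorm ip x * hnorm ip y)\<^sup>2" by (simp add: power_mult_distrib)
  then show ?thesis using hnorm_nonneg by (meson mult_nonneg_nonneg power2_le_imp_le)
qed

lemma hnorm_triangle: "hnorm ip (x + y) \<le> hnorm ip x + hnorm ip y"
proof -
  have "Re (ip x y) \<le> hnorm ip x * hnorm ip y"
    using complex_Re_le_cmod ip_Cauchy_Schwarz order_trans by blast
  then have "(hnorm ip (x + y))\<^sup>2 \<le> (hnorm ip x + hnorm ip y)\<^sup>2"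
    unfolding hnorm_add_square by (simp add: power2_sum)
  then show ?thesis using hnorm_nonneg by (meson add_nonneg_nonneg power2_le_imp_le)
qed

lemma hnorm_minus_commute: "hnorm ip (x - y) = hnorm ip (y - x)"
  unfolding hnorm_def by (metis ip_minus_left ip_minus_right minus_diff_eq minus_minus)

lemma hnorm_diff_abs_le: "\<bar>hnorm ip x - hnorm ip y\<bar> \<le> hnorm ip (x - y)"
  using hnorm_triangle[of "x - y" y] hnorm_triangle[of "y - x" x] hnorm_minus_commute[of x y]
  by simp

lemma bessel_inequality:
  assumes "finite F" and orthonormal: "\<forall>b\<in>F. \<forall>c\<in>F. ip b c = (if b = c then 1 else 0)"
  shows "(\<Sum>b\<in>F. (cmod (ip x b))\<^sup>2) \<le> (hnorm ip x)\<^sup>2"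
proof -
  define S where "S = (\<Sum>b\<in>F. sc (ip x b) b)"
  define Q where "Q = (\<Sum>b\<in>F. complex_of_real ((cmod (ip x b))\<^sup>2))"
  have x_S: "ip x S = Q"
    unfolding S_def Q_def ip_sum_right
    by (intro sum.cong refl) (simp add: ip_scale_right cnj_mult_self)
  have S_x: "ip S x = Q"
    unfolding S_def Q_def ip_sum_left
    by (intro sum.cong refl) (simp add: ip_scale_left ip_scale_right ip_commute[of _ x] cnj_mult_self mult_cnj_self)
  have "ip S S = (\<Sum>b\<in>F. \<Sum>c\<in>F. cnj (ip x b) * ip x c * ip c b)"
    unfolding S_def ip_sum_left ip_sum_right
    by (intro sum.cong refl) (simp add: ip_scale_left ip_scale_right mult.assoc)
  also have "\<dots> = (\<Sum>b\<in>F. \<Sum>c\<in>F. if c = b then cnj (ip x b) * ip x b else 0)"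
    using orthonormal by (intro sum.cong refl) auto
  also have "\<dots> = (\<Sum>b\<in>F. ip x b * cnj (ip x b))"
    using assms(1) by (simp add: mult.commute)
  also have "\<dots> = Q"
    unfolding Q_def by (simp only: mult_cnj_self of_real_power)
  finally have "ip (x - S) (x - S) = ip x x - Q"
    by (simp add: ip_diff_left ip_diff_right x_S S_x)
  then have "0 \<le> Re (ip x x) - Re Q" using Re_ip_self_nonneg[of "x - S"] by simp
  then show ?thesis unfolding Q_def by (simp add: hnorm_square Re_sum)
qed

lemma hilbert_limit_of_Cauchy_square_bound:
  assumes Cauchy: "\<And>n k. (hnorm ip (z n - z k))\<^sup>2 \<le> 2 / real (Suc n) + 2 / real (Suc k)"
  obtains l where "(\<lambda>n. hnorm ip (z n - l)) \<longlonglongrightarrow> 0"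
proof (rule hilbert_complete)
  fix \<epsilon> :: real assume "\<epsilon> > 0"
  obtain N where N: "4 / \<epsilon>\<^sup>2 < real N" using reals_Archimedean2 by blast
  show "\<exists>N. \<forall>m\<ge>N. \<forall>n\<ge>N. hnorm ip (z m - z n) < \<epsilon>"
  proof (intro exI allI impI)
    fix a b assume "N \<le> a" "N \<le> b"
    then have "4 / \<epsilon>\<^sup>2 < real (Suc a)" "4 / \<epsilon>\<^sup>2 < real (Suc b)" using N by auto
    then have "2 / real (Suc a) < \<epsilon>\<^sup>2 / 2" "2 / real (Suc b) < \<epsilon>\<^sup>2 / 2"
      using \<open>\<epsilon> > 0\<close> by (auto simp: field_simps)
    then have "(hnorm ip (z a - z b))\<^sup>2 < \<epsilon>\<^sup>2" using Cauchy[of a b] by simp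
    then show "hnorm ip (z a - z b) < \<epsilon>" using \<open>\<epsilon> > 0\<close> by (simp add: power_less_imp_less_base)
  qed
qed

definition riesz_energy :: "('h \<Rightarrow> complex) \<Rightarrow> 'h \<Rightarrow> real" where
  "riesz_energy \<psi> x = (hnorm ip x)\<^sup>2 - 2 * Re (\<psi> x)"

lemma riesz_energy_lower_bound:
  assumes bounded: "\<And>x. cmod (\<psi> x) \<le> K * hnorm ip x"
  shows "- (K\<^sup>2) \<le> riesz_energy \<psi> x"
proof -
  have "Re (\<psi> x) \<le> K * hnorm ip x" using bounded[of x] complex_Re_le_cmod order_trans by blast
  moreover have "0 \<le> (hnorm ip x - K)\<^sup>2" by simp
  ultimately show ?thesis unfolding riesz_energy_def by (simp add: power2_diff algebra_simps)
qed

lemma riesz_energy_parallelogram: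
  assumes add: "\<And>x y. \<psi> (x + y) = \<psi> x + \<psi> y" and scale: "\<And>a x. \<psi> (sc a x) = a * \<psi> x"
  shows "(hnorm ip (a - b))\<^sup>2 =
    2 * riesz_energy \<psi> a + 2 * riesz_energy \<psi> b - 4 * riesz_energy \<psi> (sc (1/2) (a + b))"
proof -
  have "(hnorm ip (sc (1/2) (a + b)))\<^sup>2 = (hnorm ip (a + b))\<^sup>2 / 4"
    by (simp add: hnorm_sc power_divide)
  moreover have "Re (\<psi> (sc (1/2) (a + b))) = (Re (\<psi> a) + Re (\<psi> b)) / 2"
    by (simp add: scale add)
  ultimately show ?thesis
    unfolding riesz_energy_def using hnorm_parallelogram[of a b] by (simp add: algebra_simps)
qed

lemma riesz_energy_minimizer:
  assumes add: "\<And>x y. \<psi> (x + y) = \<psi> x + \<psi> y"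
    and scale: "\<And>a x. \<psi> (sc a x) = a * \<psi> x"
    and bounded: "\<And>x. cmod (\<psi> x) \<le> K * hnorm ip x"
  obtains \<zeta> where "\<And>x. riesz_energy \<psi> \<zeta> \<le> riesz_energy \<psi> x"
proof -
  let ?F = "riesz_energy \<psi>"
  define m where "m = Inf (range ?F)"
  have bdd: "bdd_below (range ?F)"
    using riesz_energy_lower_bound[OF bounded] by (intro bdd_belowI[where m="- (K\<^sup>2)"]) auto
  have m_le: "m \<le> ?F x" for x unfolding m_def using bdd by (intro cInf_lower) auto
  have "\<forall>n. \<exists>z. ?F z < m + 1 / real (Suc n)"
  proof
    fix n :: nat
    have "Inf (range ?F) < m + 1 / real (Suc n)" unfolding m_def by simp
    then show "\<exists>z. ?F z < m + 1 / real (Suc n)" using cInf_less_iff[OF _ bdd] by auto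
  qed
  then obtain z where z: "\<And>n. ?F (z n) < m + 1 / real (Suc n)" by metis
  have "(hnorm ip (z n - z k))\<^sup>2 \<le> 2 / real (Suc n) + 2 / real (Suc k)" for n k
    using riesz_energy_parallelogram[OF add scale, of "z n" "z k"] z[of n] z[of k]
      m_le[of "sc (1/2) (z n + z k)"] by simp
  then obtain \<zeta> where conv: "(\<lambda>n. hnorm ip (z n - \<zeta>)) \<longlonglongrightarrow> 0"
    by (rule hilbert_limit_of_Cauchy_square_bound)
  have "(\<lambda>n. hnorm ip (z n)) \<longlonglongrightarrow> hnorm ip \<zeta>"
    by (rule tendsto_of_norm_diff_le[OF _ conv]) (simp add: hnorm_diff_abs_le)
  moreover have "(\<lambda>n. \<psi> (z n)) \<longlonglongrightarrow> \<psi> \<zeta>"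
  proof (rule tendsto_of_norm_diff_le)
    show "(\<lambda>n. K * hnorm ip (z n - \<zeta>)) \<longlonglongrightarrow> 0" using tendsto_mult_right_zero[OF conv] by simp
    show "norm (\<psi> (z n) - \<psi> \<zeta>) \<le> K * hnorm ip (z n - \<zeta>)" for n
      using bounded[of "z n - \<zeta>"] add[of "z n" "sc (- 1) \<zeta>"] scale[of "- 1" \<zeta>] sc_minus_one[of \<zeta>]
      by simp
  qed
  ultimately have "(\<lambda>n. ?F (z n)) \<longlonglongrightarrow> ?F \<zeta>" unfolding riesz_energy_def by (intro tendsto_intros)
  moreover have "(\<lambda>n. ?F (z n)) \<longlonglongrightarrow> m"
  proof (rule tendsto_of_norm_diff_le)
    show "(\<lambda>n. 1 / real (Suc n)) \<longlonglongrightarrow> 0" by (rule LIMSEQ_Suc[OF lim_const_over_n])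
    show "norm (?F (z n) - m) \<le> 1 / real (Suc n)" for n using z[of n] m_le[of "z n"] by simp
  qed
  ultimately have "?F \<zeta> = m" by (rule LIMSEQ_unique)
  then show ?thesis using that m_le by metis
qed

lemma riesz_representation:
  assumes add: "\<And>x y. \<psi> (x + y) = \<psi> x + \<psi> y"
    and scale: "\<And>a x. \<psi> (sc a x) = a * \<psi> x"
    and bounded: "\<And>x. cmod (\<psi> x) \<le> K * hnorm ip x"
  obtains \<zeta> where "\<And>x. ip x \<zeta> = \<psi> x"
proof -
  obtain \<zeta> where min: "\<And>x. riesz_energy \<psi> \<zeta> \<le> riesz_energy \<psi> x"
    using riesz_energy_minimizer[OF add scale bounded] by blast
  have "ip \<xi> \<zeta> - \<psi> \<xi> = 0" for \<xi>
  proof (rule first_variation_eq_0)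
    fix s :: complex
    \<comment> \<open>compare \<open>\<zeta>\<close> with \<open>\<zeta> - cnj s \<xi>\<close>\<close>
    define u where "u = - cnj s"
    have "ip \<zeta> (sc u \<xi>) = - (s * cnj (ip \<xi> \<zeta>))"
      unfolding u_def ip_scale_right using ip_commute[of \<xi> \<zeta>] by simp
    then have "(hnorm ip (\<zeta> + sc u \<xi>))\<^sup>2 = (hnorm ip \<zeta>)\<^sup>2 + (cmod s)\<^sup>2 * (hnorm ip \<xi>)\<^sup>2 - 2 * Re (cnj s * ip \<xi> \<zeta>)"
      unfolding hnorm_add_square hnorm_sc u_def by (simp add: power_mult_distrib)
    moreover have "\<psi> (\<zeta> + sc u \<xi>) = \<psi> \<zeta> - cnj s * \<psi> \<xi>" unfolding u_def add scale by simp
    ultimately have "riesz_energy \<psi> (\<zeta> + sc u \<xi>) =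
        riesz_energy \<psi> \<zeta> + (cmod s)\<^sup>2 * (hnorm ip \<xi>)\<^sup>2 - 2 * Re (cnj s * (ip \<xi> \<zeta> - \<psi> \<xi>))"
      unfolding riesz_energy_def by (simp add: right_diff_distrib)
    then show "0 \<le> - 2 * Re (cnj s * (ip \<xi> \<zeta> - \<psi> \<xi>)) + (cmod s)\<^sup>2 * (hnorm ip \<xi>)\<^sup>2"
      using min[of "\<zeta> + sc u \<xi>"] by simp
  qed simp
  then show ?thesis using that by (metis right_minus_eq)
qed

end

locale hilbert_star =
  fixes sc :: "complex \<Rightarrow> 'h::ab_group_add \<Rightarrow> 'h" and ip :: "'h \<Rightarrow> 'h \<Rightarrow> complex"
    and star :: "'h \<Rightarrow> 'h"
  assumes hilbert_star: "hilbert_star_space sc ip star"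

context hilbert_star
begin

sublocale complex_hilbert
  using hilbert_star unfolding hilbert_star_space_def by unfold_locales (rule conjunct1)

lemma star_add: "star (x + y) = star x + star y"
  and star_sc: "star (sc a x) = sc (cnj a) (star x)"
  and star_star: "star (star x) = x"
  and ip_star: "ip (star x) (star y) = cnj (ip x y)"
  using hilbert_star unfolding hilbert_star_space_def by - (meson+)

lemma star_minus: "star (- x) = - star x"
proof -
  have "star 0 = 0" using star_add[of 0 0] by simp
  then have "star x + star (- x) = 0" using star_add[of x "- x"] by simp
  then show ?thesis by (metis neg_eq_iff_add_eq_0)
qed

lemma star_diff: "star (x - y) = star x - star y"
  using star_add[of x "- y"] star_minus[of y] by simp

lemma Im_ip_hermitian: "star x = x \<Longrightarrow> star y = y \<Longrightarrow> Im (ip x y) = 0"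
  using ip_star[of x y] by (metis cnj.simps(2) neg_equal_zero)

end

locale unital_hilbert =
  fixes sc :: "complex \<Rightarrow> 'h::ab_group_add \<Rightarrow> 'h" and ip :: "'h \<Rightarrow> 'h \<Rightarrow> complex"
    and star :: "'h \<Rightarrow> 'h" and e :: 'h
  assumes unital_hilbert: "unital_hilbert_space sc ip star e"

context unital_hilbert
begin

sublocale hilbert_star
  using unital_hilbert unfolding unital_hilbert_space_def by unfold_locales (rule conjunct1)

lemma star_e: "star e = e" and hnorm_e: "hnorm ip e = 1"
  using unital_hilbert unfolding unital_hilbert_space_def by blast+

lemma ip_e_e: "ip e e = 1"
  using hnorm_e ip_self_eq_hnorm_square[of e] by simp

lemma hermitian_decomposition:
  assumes "star \<zeta> = \<zeta>"
  defines "c \<equiv> ip \<zeta> e"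
  shows "Im c = 0" and "\<zeta> - sc c e \<in> herm_perp ip star e"
    and "(hnorm ip \<zeta>)\<^sup>2 = (Re c)\<^sup>2 + (hnorm ip (\<zeta> - sc c e))\<^sup>2"
proof -
  show Im_c: "Im c = 0" unfolding c_def using Im_ip_hermitian assms(1) star_e by blast
  then have cnj_c: "cnj c = c" by (simp add: complex_eq_iff)
  have perp: "ip (\<zeta> - sc c e) e = 0" by (simp add: ip_diff_left ip_scale_left ip_e_e c_def)
  then show "\<zeta> - sc c e \<in> herm_perp ip star e"
    unfolding herm_perp_def by (simp add: star_diff star_sc cnj_c star_e assms(1))
  have "ip (sc c e) (\<zeta> - sc c e) = 0"
    using perp ip_commute[of "\<zeta> - sc c e" e] by (simp add: ip_scale_left)
  then have "(hnorm ip (sc c e + (\<zeta> - sc c e)))\<^sup>2 = (hnorm ip (sc c e))\<^sup>2 + (hnorm ip (\<zeta> - sc c e))\<^sup>2"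
    unfolding hnorm_add_square by simp
  moreover have "(hnorm ip (sc c e))\<^sup>2 = (Re c)\<^sup>2"
    using Im_c by (simp add: hnorm_sc hnorm_e cmod_eq_Re)
  ultimately show "(hnorm ip \<zeta>)\<^sup>2 = (Re c)\<^sup>2 + (hnorm ip (\<zeta> - sc c e))\<^sup>2" by simp
qed

lemma state_spaceE:
  assumes "t \<in> state_space ip star e"
  obtains \<eta>0 where "t = \<eta>0 + e" "ip \<eta>0 e = 0" "star \<eta>0 = \<eta>0" "hnorm ip \<eta>0 \<le> 1"
  using assms unfolding state_space_def herm_perp_def by blast

lemma star_state: "t \<in> state_space ip star e \<Longrightarrow> star t = t"
  by (erule state_spaceE) (simp add: star_add star_e)

lemma ip_e_state: "t \<in> state_space ip star e \<Longrightarrow> ip e t = 1"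
proof (erule state_spaceE)
  fix \<eta>0 assume "t = \<eta>0 + e" "ip \<eta>0 e = 0"
  then show "ip e t = 1" using ip_commute[of \<eta>0 e] by (simp add: ip_add_right ip_e_e)
qed

lemma ip_star_state: "t \<in> state_space ip star e \<Longrightarrow> ip (star \<zeta>) t = cnj (ip \<zeta> t)"
  using ip_star[of \<zeta> t] star_state by simp

lemma Im_ip_state: "t \<in> state_space ip star e \<Longrightarrow> star \<zeta> = \<zeta> \<Longrightarrow> Im (ip \<zeta> t) = 0"
  using Im_ip_hermitian star_state by blast

lemma hnorm_state_square_le: "t \<in> state_space ip star e \<Longrightarrow> (hnorm ip t)\<^sup>2 \<le> 2"
proof (erule state_spaceE)
  fix \<eta>0 assume "t = \<eta>0 + e" "ip \<eta>0 e = 0" "hnorm ip \<eta>0 \<le> 1"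
  then show "(hnorm ip t)\<^sup>2 \<le> 2"
    using hnorm_add_square[of \<eta>0 e] hnorm_e hnorm_nonneg[of \<eta>0] by (simp add: abs_square_le_1)
qed

lemma norm_ip_state_le:
  assumes "t \<in> state_space ip star e"
  shows "cmod (ip \<zeta> t) \<le> sqrt 2 * hnorm ip \<zeta>"
proof -
  have "hnorm ip t \<le> sqrt 2"
    using hnorm_state_square_le[OF assms] hnorm_nonneg by (metis real_le_rsqrt)
  then show ?thesis using ip_Cauchy_Schwarz[of \<zeta> t] hnorm_nonneg
    by (metis mult.commute mult_left_mono order_trans)
qed

lemma norm_ip_state_le_of_perp:
  assumes "t \<in> state_space ip star e" and "ip \<zeta> e = 0"
  shows "cmod (ip \<zeta> t) \<le> hnorm ip \<zeta>"
proof (rule state_spaceE[OF assms(1)])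
  fix \<eta>0 assume "t = \<eta>0 + e" "hnorm ip \<eta>0 \<le> 1"
  then have "cmod (ip \<zeta> t) \<le> hnorm ip \<zeta> * hnorm ip \<eta>0"
    using assms(2) ip_Cauchy_Schwarz[of \<zeta> \<eta>0] by (simp add: ip_add_right)
  also have "\<dots> \<le> hnorm ip \<zeta>"
    using \<open>hnorm ip \<eta>0 \<le> 1\<close> hnorm_nonneg by (simp add: mult_left_le)
  finally show ?thesis .
qed

end

section \<open>Square-integrable functions\<close>

lemma borel_measurable_cnj[measurable (raw)]:
  "f \<in> borel_measurable M \<Longrightarrow> (\<lambda>x. cnj (f x)) \<in> borel_measurable M"
  by (rule borel_measurable_continuous_on[OF linear_continuous_on[OF bounded_linear_cnj]])

lemma L2I: "f \<in> borel_measurable M \<Longrightarrow> integrable M (\<lambda>t. (cmod (f t))\<^sup>2) \<Longrightarrow> f \<in> L2 M"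
  unfolding L2_def by simp
lemma L2_measurable: "f \<in> L2 M \<Longrightarrow> f \<in> borel_measurable M"
  unfolding L2_def by simp
lemma integrable_L2_square: "f \<in> L2 M \<Longrightarrow> integrable M (\<lambda>t. (cmod (f t))\<^sup>2)"
  unfolding L2_def by simp

lemma integrable_L2_mult_cnj:
  assumes "f \<in> L2 M" "g \<in> L2 M"
  shows "integrable M (\<lambda>t. f t * cnj (g t))"
proof (rule Bochner_Integration.integrable_bound)
  show "integrable M (\<lambda>t. (cmod (f t))\<^sup>2 + (cmod (g t))\<^sup>2)"
    using assms by (intro Bochner_Integration.integrable_add integrable_L2_square)
  show "(\<lambda>t. f t * cnj (g t)) \<in> borel_measurable M" using L2_measurable[OF assms(1)] L2_measurable[OF assms(2)] by measurable
  show "AE x in M. norm (f x * cnj (g x)) \<le> norm ((cmod (f x))\<^sup>2 + (cmod (g x))\<^sup>2)"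
  proof (intro AE_I2)
    fix x
    have "cmod (f x) * cmod (g x) \<le> (cmod (f x))\<^sup>2 + (cmod (g x))\<^sup>2"
      using sum_squares_bound[of "cmod (f x)" "cmod (g x)"]
        mult_nonneg_nonneg[OF norm_ge_zero norm_ge_zero, of "f x" "g x"] by linarith
    then show "norm (f x * cnj (g x)) \<le> norm ((cmod (f x))\<^sup>2 + (cmod (g x))\<^sup>2)"
      by (simp add: norm_mult)
  qed
qed

lemma L2_add: assumes "f \<in> L2 M" "g \<in> L2 M" shows "(\<lambda>t. f t + g t) \<in> L2 M"
proof (rule L2I)
  show "(\<lambda>t. f t + g t) \<in> borel_measurable M" using L2_measurable[OF assms(1)] L2_measurable[OF assms(2)] by measurable
  show "integrable M (\<lambda>t. (cmod (f t + g t))\<^sup>2)"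
  proof (rule Bochner_Integration.integrable_bound)
    show "integrable M (\<lambda>t. 2 * (cmod (f t))\<^sup>2 + 2 * (cmod (g t))\<^sup>2)"
      using assms by (intro Bochner_Integration.integrable_add Bochner_Integration.integrable_mult_right integrable_L2_square)
    show "(\<lambda>t. (cmod (f t + g t))\<^sup>2) \<in> borel_measurable M" using L2_measurable[OF assms(1)] L2_measurable[OF assms(2)] by measurable
    show "AE x in M. norm ((cmod (f x + g x))\<^sup>2) \<le> norm (2 * (cmod (f x))\<^sup>2 + 2 * (cmod (g x))\<^sup>2)"
    proof (intro AE_I2)
      fix x
      have "cmod (f x + g x) \<le> cmod (f x) + cmod (g x)" by (rule norm_triangle_ineq)
      then have "(cmod (f x + g x))\<^sup>2 \<le> (cmod (f x) + cmod (g x))\<^sup>2"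
        by (simp add: power_mono)
      also have "\<dots> \<le> 2 * (cmod (f x))\<^sup>2 + 2 * (cmod (g x))\<^sup>2"
        using sum_squares_bound[of "cmod (f x)" "cmod (g x)"] by (simp add: power2_sum)
      finally show "norm ((cmod (f x + g x))\<^sup>2) \<le> norm (2 * (cmod (f x))\<^sup>2 + 2 * (cmod (g x))\<^sup>2)"
        by simp
    qed
  qed
qed

lemma L2_scale: assumes "f \<in> L2 M" shows "(\<lambda>t. c * f t) \<in> L2 M"
proof (rule L2I)
  show "(\<lambda>t. c * f t) \<in> borel_measurable M" using L2_measurable[OF assms(1)] by measurable
  have "integrable M (\<lambda>t. (cmod c)\<^sup>2 * (cmod (f t))\<^sup>2)" using integrable_L2_square[OF assms] by simp
  then show "integrable M (\<lambda>t. (cmod (c * f t))\<^sup>2)" by (simp add: norm_mult power_mult_distrib)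
qed

lemma L2_minus: "f \<in> L2 M \<Longrightarrow> (\<lambda>t. - f t) \<in> L2 M"
  using L2_scale[of f M "-1"] by simp

lemma L2_diff: "f \<in> L2 M \<Longrightarrow> g \<in> L2 M \<Longrightarrow> (\<lambda>t. f t - g t) \<in> L2 M"
  using L2_add[of f M "\<lambda>t. - g t"] L2_minus[of g M] by simp

lemma L2_cnj: assumes "f \<in> L2 M" shows "(\<lambda>t. cnj (f t)) \<in> L2 M"
  using assms borel_measurable_cnj[of f M] unfolding L2_def by simp

lemma L2_of_bounded: assumes "finite_measure M" "f \<in> borel_measurable M" "\<And>t. t \<in> space M \<Longrightarrow> cmod (f t) \<le> C"
  shows "f \<in> L2 M"
proof (rule L2I)
  show "f \<in> borel_measurable M" by fact
  show "integrable M (\<lambda>t. (cmod (f t))\<^sup>2)"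
  proof (rule finite_measure.integrable_const_bound[OF assms(1)])
    show "AE x in M. norm ((cmod (f x))\<^sup>2) \<le> C\<^sup>2"
      using assms(3) by (intro AE_I2) (simp add: power_mono)
    show "(\<lambda>t. (cmod (f t))\<^sup>2) \<in> borel_measurable M" using assms(2) by measurable
  qed
qed

lemma L2_const: "finite_measure M \<Longrightarrow> (\<lambda>t. c) \<in> L2 M"
  by (rule L2_of_bounded[where C="cmod c"]) auto

lemma L2norm_cong: "(\<And>t. t \<in> space M \<Longrightarrow> f t = g t) \<Longrightarrow> L2norm M f = L2norm M g"
  unfolding L2norm_def by (simp cong: Bochner_Integration.integral_cong)

lemma L2inner_cong: "(\<And>t. t \<in> space M \<Longrightarrow> f t = f' t) \<Longrightarrow> (\<And>t. t \<in> space M \<Longrightarrow> g t = g' t)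
   \<Longrightarrow> L2inner M f g = L2inner M f' g'"
  unfolding L2inner_def by (simp cong: Bochner_Integration.integral_cong)

lemma L2_cong: assumes eq: "\<And>t. t \<in> space M \<Longrightarrow> f t = g t" and f: "f \<in> L2 M" shows "g \<in> L2 M"
proof (rule L2I)
  show "g \<in> borel_measurable M" using L2_measurable[OF f] eq measurable_cong by metis
  show "integrable M (\<lambda>t. (cmod (g t))\<^sup>2)" using integrable_L2_square[OF f] eq by (simp cong: Bochner_Integration.integrable_cong)
qed

lemma L2norm_scale: "L2norm M (\<lambda>t. c * f t) = cmod c * L2norm M f"
  unfolding L2norm_def by (simp add: norm_mult power_mult_distrib real_sqrt_mult)

lemma L2norm_cnj: "L2norm M (\<lambda>t. cnj (f t)) = L2norm M f"
  unfolding L2norm_def by simp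

lemma L2norm_nonneg: "0 \<le> L2norm M f"
  unfolding L2norm_def by (simp add: integral_nonneg_AE)

lemma L2norm_square: "(L2norm M f)\<^sup>2 = (\<integral>t. (cmod (f t))\<^sup>2 \<partial>M)"
  unfolding L2norm_def by (simp add: integral_nonneg_AE)

lemma L2inner_self: "L2inner M f f = complex_of_real ((L2norm M f)\<^sup>2)"
proof -
  have "L2inner M f f = (\<integral>t. complex_of_real ((cmod (f t))\<^sup>2) \<partial>M)"
    unfolding L2inner_def by (intro Bochner_Integration.integral_cong refl) (rule complex_norm_square[symmetric])
  then show ?thesis by (simp only: L2norm_square integral_complex_of_real)
qed

lemma L2inner_add_left: "f \<in> L2 M \<Longrightarrow> g \<in> L2 M \<Longrightarrow> h \<in> L2 M \<Longrightarrow>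
    L2inner M (\<lambda>t. f t + g t) h = L2inner M f h + L2inner M g h"
  unfolding L2inner_def using integrable_L2_mult_cnj[of f M h] integrable_L2_mult_cnj[of g M h]
  by (simp add: distrib_right)

lemma L2inner_diff_left: "f \<in> L2 M \<Longrightarrow> g \<in> L2 M \<Longrightarrow> h \<in> L2 M \<Longrightarrow>
    L2inner M (\<lambda>t. f t - g t) h = L2inner M f h - L2inner M g h"
  unfolding L2inner_def using integrable_L2_mult_cnj[of f M h] integrable_L2_mult_cnj[of g M h]
  by (simp add: left_diff_distrib)

lemma L2inner_scale_left: "L2inner M (\<lambda>t. c * f t) h = c * L2inner M f h"
  unfolding L2inner_def by (simp add: mult.assoc)

lemma L2inner_commute: "L2inner M g f = cnj (L2inner M f g)"
proof -
  have "cnj (L2inner M f g) = (\<integral>t. cnj (f t * cnj (g t)) \<partial>M)" unfolding L2inner_def by (rule Bochner_Integration.integral_cnj[symmetric])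
  also have "\<dots> = L2inner M g f" unfolding L2inner_def by (simp add: mult.commute)
  finally show ?thesis by simp
qed

lemma L2inner_diff_right: "f \<in> L2 M \<Longrightarrow> g \<in> L2 M \<Longrightarrow> h \<in> L2 M \<Longrightarrow>
    L2inner M h (\<lambda>t. f t - g t) = L2inner M h f - L2inner M h g"
  using L2inner_commute[of M h "\<lambda>t. f t - g t"] L2inner_commute[of M h f] L2inner_commute[of M h g] L2inner_diff_left[of f M g h] by simp

lemma L2inner_scale_right: "L2inner M h (\<lambda>t. c * f t) = cnj c * L2inner M h f"
  using L2inner_commute[of M h "\<lambda>t. c * f t"] L2inner_commute[of M h f] L2inner_scale_left[of M c f h] by simp

lemma L2_zero: "(\<lambda>t. 0) \<in> L2 M"
  by (rule L2I) auto

lemma L2norm_zero [simp]: "L2norm M (\<lambda>t. 0) = 0"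
  unfolding L2norm_def by simp

lemma L2norm_of_real_cmod: "L2norm M (\<lambda>t. complex_of_real (cmod (f t))) = L2norm M f"
  unfolding L2norm_def by simp

lemma L2_of_real_cmod: "f \<in> L2 M \<Longrightarrow> (\<lambda>t. complex_of_real (cmod (f t))) \<in> L2 M"
  unfolding L2_def by auto

lemma L2norm_diff_scale_square:
  assumes "a \<in> L2 M" "b \<in> L2 M"
  shows "(L2norm M (\<lambda>t. a t - s * b t))\<^sup>2 =
    (L2norm M a)\<^sup>2 - 2 * Re (cnj s * L2inner M a b) + (cmod s)\<^sup>2 * (L2norm M b)\<^sup>2"
proof -
  have sb: "(\<lambda>t. s * b t) \<in> L2 M" using assms L2_scale by blast
  have "complex_of_real ((L2norm M (\<lambda>t. a t - s * b t))\<^sup>2) = L2inner M (\<lambda>t. a t - s * b t) (\<lambda>t. a t - s * b t)"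
    by (simp add: L2inner_self)
  also have "\<dots> = L2inner M a a - cnj s * L2inner M a b - s * L2inner M b a + s * cnj s * L2inner M b b"
    using assms sb L2_diff[OF assms(1) sb]
    by (simp add: L2inner_diff_left L2inner_diff_right L2inner_scale_left L2inner_scale_right algebra_simps)
  also have "L2inner M b a = cnj (L2inner M a b)" by (rule L2inner_commute)
  also have "s * cnj s = complex_of_real ((cmod s)\<^sup>2)" by (rule complex_norm_square[symmetric])
  finally have "complex_of_real ((L2norm M (\<lambda>t. a t - s * b t))\<^sup>2) =
     L2inner M a a - cnj s * L2inner M a b - cnj (cnj s * L2inner M a b) + complex_of_real ((cmod s)\<^sup>2) * L2inner M b b"
    by simp
  from arg_cong[OF this, of Re] show ?thesis by (simp add: L2inner_self)
qed

lemma L2inner_Cauchy_Schwarz: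
  assumes "a \<in> L2 M" "b \<in> L2 M"
  shows "cmod (L2inner M a b) \<le> L2norm M a * L2norm M b"
proof -
  have "(cmod (L2inner M a b))\<^sup>2 \<le> (L2norm M a)\<^sup>2 * (L2norm M b)\<^sup>2"
    by (rule cmod_square_le_of_quadratic_nonneg) (metis L2norm_diff_scale_square[OF assms] zero_le_power2, simp)
  then have "(cmod (L2inner M a b))\<^sup>2 \<le> (L2norm M a * L2norm M b)\<^sup>2" by (simp add: power_mult_distrib)
  then show ?thesis using L2norm_nonneg by (meson mult_nonneg_nonneg power2_le_imp_le)
qed

lemma L2norm_triangle:
  assumes "a \<in> L2 M" "b \<in> L2 M"
  shows "L2norm M (\<lambda>t. a t + b t) \<le> L2norm M a + L2norm M b"
proof -
  have eq: "(\<lambda>t. a t - (-1) * b t) = (\<lambda>t. a t + b t)" by simp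
  have "(L2norm M (\<lambda>t. a t + b t))\<^sup>2 = (L2norm M a)\<^sup>2 + 2 * Re (L2inner M a b) + (L2norm M b)\<^sup>2"
    using L2norm_diff_scale_square[OF assms, of "-1"] unfolding eq by simp
  also have "Re (L2inner M a b) \<le> L2norm M a * L2norm M b"
    using L2inner_Cauchy_Schwarz[OF assms] complex_Re_le_cmod order_trans by blast
  finally have "(L2norm M (\<lambda>t. a t + b t))\<^sup>2 \<le> (L2norm M a + L2norm M b)\<^sup>2"
    by (simp add: power2_sum)
  then show ?thesis using L2norm_nonneg by (meson add_nonneg_nonneg power2_le_imp_le)
qed

lemma L2norm_parallelogram:
  assumes "a \<in> L2 M" "b \<in> L2 M"
  shows "(L2norm M (\<lambda>t. a t - b t))\<^sup>2 + (L2norm M (\<lambda>t. a t + b t))\<^sup>2 = 2 * (L2norm M a)\<^sup>2 + 2 * (L2norm M b)\<^sup>2"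
  using L2norm_diff_scale_square[OF assms, of 1] L2norm_diff_scale_square[OF assms, of "- 1"] by simp

lemma L2inner_one: "L2inner M a (\<lambda>t. 1) = (\<integral>t. a t \<partial>M)"
  unfolding L2inner_def by simp

lemma integrable_of_L2: "finite_measure M \<Longrightarrow> a \<in> L2 M \<Longrightarrow> integrable M a"
  using integrable_L2_mult_cnj[of a M "\<lambda>t. 1"] L2_const[of M 1] by simp

lemma AE_eq_0_of_L2norm_eq_0: assumes "f \<in> L2 M" "L2norm M f = 0" shows "AE t in M. f t = 0"
proof -
  have "(\<integral>t. (cmod (f t))\<^sup>2 \<partial>M) = 0" using L2norm_square[of M f] assms(2) by simp
  then have "AE t in M. (cmod (f t))\<^sup>2 = 0"
    using integral_nonneg_eq_0_iff_AE[OF integrable_L2_square[OF assms(1)]] by simp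
  then show ?thesis by simp
qed

lemma L2inner_cong_AE:
  assumes "AE t in M. f t = f' t" "f \<in> borel_measurable M" "f' \<in> borel_measurable M"
    and "g \<in> borel_measurable M"
  shows "L2inner M f g = L2inner M f' g"
  unfolding L2inner_def using assms by (intro integral_cong_AE) (auto elim: AE_mp)

lemma L2norm_le_of_bounded:
  assumes "prob_space M" and "f \<in> L2 M" and bound: "\<And>t. t \<in> space M \<Longrightarrow> cmod (f t) \<le> c"
  shows "L2norm M f \<le> c"
proof -
  have c: "0 \<le> c"
    using prob_space.not_empty[OF assms(1)] bound norm_ge_zero order_trans by blast
  have "(\<integral>t. (cmod (f t))\<^sup>2 \<partial>M) \<le> (\<integral>t. c\<^sup>2 \<partial>M)"
  proof (rule integral_mono)
    show "integrable M (\<lambda>t. (cmod (f t))\<^sup>2)" using assms(2) by (rule integrable_L2_square)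
    show "integrable M (\<lambda>t. c\<^sup>2)"
      using assms(1) by (simp add: prob_space_def finite_measure.integrable_const)
  qed (use bound in \<open>simp add: power_mono\<close>)
  also have "\<dots> = c\<^sup>2" using prob_space.prob_space[OF assms(1)] by simp
  finally have "(L2norm M f)\<^sup>2 \<le> c\<^sup>2" by (simp add: L2norm_square)
  then show ?thesis using c by (rule power2_le_imp_le)
qed

lemma L2norm_sum_le:
  assumes "finite F" "\<And>k. k \<in> F \<Longrightarrow> f k \<in> L2 M"
  shows "(\<lambda>t. \<Sum>k\<in>F. f k t) \<in> L2 M \<and> L2norm M (\<lambda>t. \<Sum>k\<in>F. f k t) \<le> (\<Sum>k\<in>F. L2norm M (f k))"
  using assms
proof (induction F rule: finite_induct)
  case empty
  then show ?case using L2_zero by simp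
next
  case (insert x F)
  have fx: "f x \<in> L2 M" using insert by simp
  have IH: "(\<lambda>t. \<Sum>k\<in>F. f k t) \<in> L2 M" "L2norm M (\<lambda>t. \<Sum>k\<in>F. f k t) \<le> (\<Sum>k\<in>F. L2norm M (f k))"
    using insert by auto
  have eq: "(\<lambda>t. \<Sum>k\<in>insert x F. f k t) = (\<lambda>t. f x t + (\<Sum>k\<in>F. f k t))"
    using insert by simp
  show ?case unfolding eq
  proof
    show "(\<lambda>t. f x t + (\<Sum>k\<in>F. f k t)) \<in> L2 M" using L2_add[OF fx IH(1)] by simp
    have "L2norm M (\<lambda>t. f x t + (\<Sum>k\<in>F. f k t)) \<le> L2norm M (f x) + L2norm M (\<lambda>t. \<Sum>k\<in>F. f k t)"
      using L2norm_triangle[OF fx IH(1)] by simp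
    also have "\<dots> \<le> L2norm M (f x) + (\<Sum>k\<in>F. L2norm M (f k))" using IH(2) by simp
    finally show "L2norm M (\<lambda>t. f x t + (\<Sum>k\<in>F. f k t)) \<le> (\<Sum>k\<in>insert x F. L2norm M (f k))"
      using insert by simp
  qed
qed

lemma L2norm_diff_le_of_tendsto:
  assumes f: "f \<in> L2 M" and g: "g \<in> L2 M" and h: "\<And>n. h n \<in> L2 M"
    and lim: "(\<lambda>n. L2norm M (\<lambda>t. g t - h n t)) \<longlonglongrightarrow> 0"
    and b: "b \<longlonglongrightarrow> \<beta>" and bound: "\<And>n. L2norm M (\<lambda>t. f t - h n t) \<le> b n"
  shows "L2norm M (\<lambda>t. f t - g t) \<le> \<beta>"
proof (rule LIMSEQ_le_const)
  show "(\<lambda>n. b n + L2norm M (\<lambda>t. g t - h n t)) \<longlonglongrightarrow> \<beta>"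
    using tendsto_add[OF b lim] by simp
  show "\<exists>N. \<forall>n\<ge>N. L2norm M (\<lambda>t. f t - g t) \<le> b n + L2norm M (\<lambda>t. g t - h n t)"
  proof (intro exI allI impI)
    fix n
    have "L2norm M (\<lambda>t. f t - g t) = L2norm M (\<lambda>t. (f t - h n t) + (-1) * (g t - h n t))"
      by simp
    also have "\<dots> \<le> L2norm M (\<lambda>t. f t - h n t) + L2norm M (\<lambda>t. (-1) * (g t - h n t))"
      using f g h by (intro L2norm_triangle L2_scale L2_diff) auto
    also have "L2norm M (\<lambda>t. (-1) * (g t - h n t)) = L2norm M (\<lambda>t. g t - h n t)"
      by (simp only: L2norm_scale) simp
    finally show "L2norm M (\<lambda>t. f t - g t) \<le> b n + L2norm M (\<lambda>t. g t - h n t)"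
      using bound[of n] by simp
  qed
qed

lemma AE_bdd_above_of_bounded_integrals:
  fixes u :: "nat \<Rightarrow> 'a \<Rightarrow> real"
  assumes int: "\<And>N. integrable M (u N)" and nn: "\<And>N t. 0 \<le> u N t"
    and mono: "\<And>N t. u N t \<le> u (Suc N) t" and bnd: "\<And>N. integral\<^sup>L M (u N) \<le> B"
  shows "AE t in M. bdd_above (range (\<lambda>N. u N t))"
proof -
  have [measurable]: "\<And>N. u N \<in> borel_measurable M" using int by auto
  have inc: "incseq (\<lambda>N t. ennreal (u N t))"
    by (intro incseq_SucI le_funI ennreal_leI mono)
  have "(\<integral>\<^sup>+t. (SUP N. ennreal (u N t)) \<partial>M) = (SUP N. \<integral>\<^sup>+t. ennreal (u N t) \<partial>M)"
    using nn_integral_monotone_convergence_SUP[OF inc] by simp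
  also have "\<dots> \<le> ennreal B"
  proof (rule SUP_least)
    fix N
    have "(\<integral>\<^sup>+t. ennreal (u N t) \<partial>M) = ennreal (integral\<^sup>L M (u N))"
      by (rule nn_integral_eq_integral[OF int]) (simp add: nn)
    also have "\<dots> \<le> ennreal B" by (rule ennreal_leI[OF bnd])
    finally show "(\<integral>\<^sup>+t. ennreal (u N t) \<partial>M) \<le> ennreal B" .
  qed
  finally have fin: "(\<integral>\<^sup>+t. (SUP N. ennreal (u N t)) \<partial>M) \<noteq> \<infinity>"
    using ennreal_less_top neq_top_trans by (metis infinity_ennreal_def less_le)
  have "AE t in M. (SUP N. ennreal (u N t)) \<noteq> \<infinity>"
    by (rule nn_integral_PInf_AE) (measurable, rule fin)
  then show ?thesis
  proof (rule AE_mp[OF _ AE_I2], intro impI)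
    fix t assume ne: "(SUP N. ennreal (u N t)) \<noteq> \<infinity>"
    then have lt: "(SUP N. ennreal (u N t)) < top" by (metis infinity_ennreal_def top.not_eq_extremum)
    show "bdd_above (range (\<lambda>N. u N t))"
    proof (rule bdd_aboveI2)
      fix N
      have "ennreal (u N t) \<le> (SUP N. ennreal (u N t))" by (rule SUP_upper) simp
      then have "enn2real (ennreal (u N t)) \<le> enn2real (SUP N. ennreal (u N t))" using lt by (rule enn2real_mono)
      then show "u N t \<le> enn2real (SUP N. ennreal (u N t))" using nn by simp
    qed
  qed
qed

lemma integrable_le_SUP_of_bounded_integrals:
  fixes u :: "nat \<Rightarrow> 'a \<Rightarrow> real"
  assumes int: "\<And>N. integrable M (u N)" and nn: "\<And>N t. 0 \<le> u N t"
    and mono: "\<And>N t. u N t \<le> u (Suc N) t" and bnd: "\<And>N. integral\<^sup>L M (u N) \<le> B"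
    and wm: "w \<in> borel_measurable M" and wle: "AE t in M. 0 \<le> w t \<and> w t \<le> (SUP N. u N t)"
  shows "integrable M w \<and> integral\<^sup>L M w \<le> B"
proof -
  have [measurable]: "\<And>N. u N \<in> borel_measurable M" using int by auto
  have bdd: "AE t in M. bdd_above (range (\<lambda>N. u N t))" by (rule AE_bdd_above_of_bounded_integrals[where u=u, OF int nn mono bnd])
  define L where "L t = lim (\<lambda>N. u N t)" for t
  have Lm: "L \<in> borel_measurable M" unfolding L_def by measurable
  have incp: "\<And>t. incseq (\<lambda>N. u N t)" by (intro incseq_SucI mono)
  have lim: "AE t in M. (\<lambda>N. u N t) \<longlonglongrightarrow> L t \<and> L t = (SUP N. u N t)"
    using bdd
  proof (rule AE_mp[OF _ AE_I2], intro impI)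
    fix t assume b: "bdd_above (range (\<lambda>N. u N t))"
    have "(\<lambda>N. u N t) \<longlonglongrightarrow> (SUP N. u N t)" by (rule LIMSEQ_incseq_SUP[OF b incp])
    then show "(\<lambda>N. u N t) \<longlonglongrightarrow> L t \<and> L t = (SUP N. u N t)"
      unfolding L_def by (simp add: limI)
  qed
  have inci: "incseq (\<lambda>N. integral\<^sup>L M (u N))"
    by (intro incseq_SucI integral_mono int mono)
  have bddi: "bdd_above (range (\<lambda>N. integral\<^sup>L M (u N)))" using bnd by (intro bdd_aboveI2)
  have ilim: "(\<lambda>N. integral\<^sup>L M (u N)) \<longlonglongrightarrow> (SUP N. integral\<^sup>L M (u N))"
    by (rule LIMSEQ_incseq_SUP[OF bddi inci])
  have Lint: "integrable M L" and Leq: "integral\<^sup>L M L = (SUP N. integral\<^sup>L M (u N))"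
    using integral_monotone_convergence_nonneg[OF int _ _ _ ilim Lm] lim nn incp
    by (auto simp: mono_def incseq_def elim: AE_mp)
  have "(SUP N. integral\<^sup>L M (u N)) \<le> B" using bnd by (intro cSUP_least) auto
  have wint: "integrable M w"
  proof (rule Bochner_Integration.integrable_bound[OF Lint wm])
    show "AE x in M. norm (w x) \<le> norm (L x)"
      using wle lim by eventually_elim auto
  qed
  have "integral\<^sup>L M w \<le> integral\<^sup>L M L"
    using wle lim by (intro integral_mono_AE wint Lint) (auto elim: AE_mp)
  then show ?thesis using wint Leq \<open>(SUP N. integral\<^sup>L M (u N)) \<le> B\<close> by simp
qed

lemma sum_half_powers_le_2: "(\<Sum>k<N. (1/2::real)^k) \<le> 2"
proof -
  have "(\<Sum>k<N. (1/2::real)^k) = (1 - (1/2)^N) / (1 - 1/2)" by (simp add: sum_gp_strict)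
  also have "\<dots> \<le> 2" by simp
  finally show ?thesis .
qed

lemma integrable_square_sum_norm_le_geometric:
  fixes d :: "nat \<Rightarrow> 'a \<Rightarrow> complex"
  assumes L2: "\<And>k. d k \<in> L2 M" and small: "\<And>k. L2norm M (d k) \<le> C * (1/2)^k"
  shows "integrable M (\<lambda>t. (\<Sum>k<N. cmod (d (n + k) t))\<^sup>2)"
    and "(\<integral>t. (\<Sum>k<N. cmod (d (n + k) t))\<^sup>2 \<partial>M) \<le> (2 * C * (1/2)^n)\<^sup>2"
proof -
  have C: "0 \<le> C" using small[of 0] L2norm_nonneg[of M "d 0"] by simp
  define S where "S t = complex_of_real (\<Sum>k<N. cmod (d (n + k) t))" for t
  have S_sum: "S = (\<lambda>t. \<Sum>k<N. complex_of_real (cmod (d (n + k) t)))"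
    unfolding S_def by (simp add: fun_eq_iff)
  have S_L2: "S \<in> L2 M \<and> L2norm M S \<le> (\<Sum>k<N. L2norm M (\<lambda>t. complex_of_real (cmod (d (n + k) t))))"
    unfolding S_sum by (rule L2norm_sum_le) (auto intro: L2_of_real_cmod L2)
  then have "L2norm M S \<le> (\<Sum>k<N. L2norm M (\<lambda>t. complex_of_real (cmod (d (n + k) t))))" ..
  also have "\<dots> \<le> (\<Sum>k<N. C * (1/2)^(n + k))"
    by (intro sum_mono) (simp add: L2norm_of_real_cmod small)
  also have "\<dots> = C * (1/2)^n * (\<Sum>k<N. (1/2)^k)"
    by (simp add: sum_distrib_left power_add mult.assoc)
  also have "\<dots> \<le> C * (1/2)^n * 2"
    using sum_half_powers_le_2 C by (intro mult_left_mono) auto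
  finally have "(L2norm M S)\<^sup>2 \<le> (2 * C * (1/2)^n)\<^sup>2"
    using L2norm_nonneg by (intro power_mono) (auto simp: mult.commute mult.left_commute)
  moreover have eq: "(\<lambda>t. (\<Sum>k<N. cmod (d (n + k) t))\<^sup>2) = (\<lambda>t. (cmod (S t))\<^sup>2)"
    unfolding S_def by (simp add: fun_eq_iff sum_nonneg del: of_real_sum)
  ultimately show "(\<integral>t. (\<Sum>k<N. cmod (d (n + k) t))\<^sup>2 \<partial>M) \<le> (2 * C * (1/2)^n)\<^sup>2"
    by (simp add: L2norm_square)
  show "integrable M (\<lambda>t. (\<Sum>k<N. cmod (d (n + k) t))\<^sup>2)"
    unfolding eq using S_L2 integrable_L2_square by blast
qed

lemma convergent_of_bounded_sum_norm_diff:
  fixes a :: "nat \<Rightarrow> 'b::banach"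
  assumes "\<And>N. (\<Sum>k<N. norm (a (Suc k) - a k)) \<le> K"
  shows "convergent a"
proof -
  have "summable (\<lambda>k. norm (a (Suc k) - a k))"
    using assms by (intro summableI_nonneg_bounded) auto
  then have "summable (\<lambda>k. a (Suc k) - a k)" by (rule summable_norm_cancel)
  then have "convergent (\<lambda>n. a n - a 0)"
    unfolding summable_iff_convergent sum_lessThan_telescope .
  then show ?thesis by (simp add: convergent_diff_const_right_iff)
qed

lemma L2_of_tendsto_dominated:
  fixes u :: "nat \<Rightarrow> 'a \<Rightarrow> real"
  assumes int: "\<And>N. integrable M (u N)" and nonneg: "\<And>N t. 0 \<le> u N t"
    and mono: "\<And>N t. u N t \<le> u (Suc N) t" and bound: "\<And>N. integral\<^sup>L M (u N) \<le> B\<^sup>2"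
    and B: "0 \<le> B" and f [measurable]: "f \<in> borel_measurable M"
    and lim: "AE t in M. (\<lambda>N. a N t) \<longlonglongrightarrow> f t" and dominated: "\<And>N t. (cmod (a N t))\<^sup>2 \<le> u N t"
  shows "f \<in> L2 M" and "L2norm M f \<le> B"
proof -
  have "AE t in M. 0 \<le> (cmod (f t))\<^sup>2 \<and> (cmod (f t))\<^sup>2 \<le> (SUP N. u N t)"
    using lim AE_bdd_above_of_bounded_integrals[where u=u, OF int nonneg mono bound]
  proof eventually_elim
    case (elim t)
    have "(\<lambda>N. (cmod (a N t))\<^sup>2) \<longlonglongrightarrow> (cmod (f t))\<^sup>2"
      by (intro tendsto_power tendsto_norm elim(1))
    moreover have "(cmod (a N t))\<^sup>2 \<le> (SUP N. u N t)" for N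
      using dominated[of N t] cSUP_upper[OF UNIV_I elim(2), of N] by linarith
    ultimately have "(cmod (f t))\<^sup>2 \<le> (SUP N. u N t)" by (intro LIMSEQ_le_const2) auto
    then show ?case by simp
  qed
  moreover have "(\<lambda>t. (cmod (f t))\<^sup>2) \<in> borel_measurable M" by measurable
  ultimately have "integrable M (\<lambda>t. (cmod (f t))\<^sup>2) \<and> (\<integral>t. (cmod (f t))\<^sup>2 \<partial>M) \<le> B\<^sup>2"
    using integrable_le_SUP_of_bounded_integrals[where u=u, OF int nonneg mono bound] by blast
  then have int_f: "integrable M (\<lambda>t. (cmod (f t))\<^sup>2)" and square: "(L2norm M f)\<^sup>2 \<le> B\<^sup>2"
    by (simp_all add: L2norm_square)
  from square B show "L2norm M f \<le> B" by (rule power2_le_imp_le)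
  show "f \<in> L2 M" using f int_f by (rule L2I)
qed

lemma L2_limit_of_geometric_Cauchy:
  fixes h :: "nat \<Rightarrow> 'a \<Rightarrow> complex"
  assumes L2: "\<And>n. h n \<in> L2 M"
    and small: "\<And>n. L2norm M (\<lambda>t. h (Suc n) t - h n t) \<le> C * (1/2)^n"
  obtains g where "g \<in> L2 M" and "(\<lambda>n. L2norm M (\<lambda>t. g t - h n t)) \<longlonglongrightarrow> 0"
proof -
  define d where "d n t = h (Suc n) t - h n t" for n t
  define u where "u n N t = (\<Sum>k<N. cmod (d (n + k) t))\<^sup>2" for n N t
  have [measurable]: "h n \<in> borel_measurable M" for n using L2 L2_measurable by blast
  have d_L2: "d k \<in> L2 M" for k unfolding d_def using L2 by (intro L2_diff)
  have d_small: "L2norm M (d k) \<le> C * (1/2)^k" for k unfolding d_def by (rule small)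
  have C: "0 \<le> C" using d_small[of 0] L2norm_nonneg[of M "d 0"] by simp
  have u_int: "integrable M (u n N)" and u_bound: "integral\<^sup>L M (u n N) \<le> (2 * C * (1/2)^n)\<^sup>2" for n N
    unfolding u_def[abs_def] using integrable_square_sum_norm_le_geometric[OF d_L2 d_small] by auto
  have u_nonneg: "0 \<le> u n N t" and u_mono: "u n N t \<le> u n (Suc N) t" for n N t
    unfolding u_def by (auto intro!: power_mono simp: sum_nonneg)
  have tail_le_u: "(cmod (h (N + n) t - h n t))\<^sup>2 \<le> u n N t" for n N t
  proof -
    have "h (N + n) t - h n t = (\<Sum>k<N. d (n + k) t)"
      unfolding d_def using sum_lessThan_telescope[of "\<lambda>k. h (n + k) t" N] by (simp add: add.commute)
    then have "cmod (h (N + n) t - h n t) \<le> (\<Sum>k<N. cmod (d (n + k) t))" by (simp add: norm_sum)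
    then show ?thesis unfolding u_def by (intro power_mono) auto
  qed
  have convergent: "AE t in M. convergent (\<lambda>n. h n t)"
    using AE_bdd_above_of_bounded_integrals[where u="u 0", OF u_int u_nonneg u_mono u_bound]
  proof eventually_elim
    case (elim t)
    then obtain K where "\<And>N. u 0 N t \<le> K" by (auto simp: bdd_above_def)
    then have "(\<Sum>k<N. cmod (h (Suc k) t - h k t)) \<le> sqrt K" for N
      unfolding u_def d_def by (intro real_le_rsqrt) simp
    then show ?case by (rule convergent_of_bounded_sum_norm_diff)
  qed
  define g where "g t = lim (\<lambda>n. h n t)" for t
  have g: "AE t in M. (\<lambda>n. h n t) \<longlonglongrightarrow> g t"
    using convergent by eventually_elim (simp add: g_def convergent_LIMSEQ_iff)
  have [measurable]: "g \<in> borel_measurable M" unfolding g_def by measurable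
  have tail: "(\<lambda>t. g t - h n t) \<in> L2 M \<and> L2norm M (\<lambda>t. g t - h n t) \<le> 2 * C * (1/2)^n" for n
  proof -
    have lim: "AE t in M. (\<lambda>N. h (N + n) t - h n t) \<longlonglongrightarrow> g t - h n t"
      using g by eventually_elim (rule tendsto_diff[OF LIMSEQ_ignore_initial_segment tendsto_const])
    have B: "0 \<le> 2 * C * (1/2::real)^n" using C by simp
    have "(\<lambda>t. g t - h n t) \<in> borel_measurable M" by measurable
    from L2_of_tendsto_dominated[where u="u n", OF u_int u_nonneg u_mono u_bound B this lim tail_le_u]
    show ?thesis by simp
  qed
  have "g \<in> L2 M" using L2_add[OF conjunct1[OF tail[of 0]] L2[of 0]] by simp
  moreover have "(\<lambda>n. L2norm M (\<lambda>t. g t - h n t)) \<longlonglongrightarrow> 0"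
  proof (rule tendsto_of_norm_diff_le)
    show "(\<lambda>n. 2 * C * (1/2::real)^n) \<longlonglongrightarrow> 0"
      by (intro tendsto_mult_right_zero LIMSEQ_power_zero) simp
  qed (simp add: L2norm_nonneg tail)
  ultimately show ?thesis by (rule that)
qed

section \<open>The embedding into \<open>L\<^sup>2\<close>\<close>

locale unital_measure_space = unital_hilbert sc ip star e
  for sc :: "complex \<Rightarrow> 'h::ab_group_add \<Rightarrow> 'h" and ip star e +
  fixes \<mu> :: "'h measure"
  assumes unital_measure: "unital_measure ip star e \<mu>"
begin

lemma prob_space: "prob_space \<mu>"
  and space_eq: "space \<mu> = state_space ip star e"
  and integrable_ip: "integrable \<mu> (ip \<zeta>)"
  and integral_ip: "(\<integral>t. ip \<zeta> t \<partial>\<mu>) = ip \<zeta> e"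
  using unital_measure unfolding unital_measure_def by auto

lemma finite_measure: "finite_measure \<mu>"
  using prob_space by (simp add: prob_space_def)

lemma borel_measurable_ip [measurable]: "ip \<zeta> \<in> borel_measurable \<mu>"
  using integrable_ip by auto

lemma iota_eq: "iota ip \<zeta> = ip \<zeta>"
  unfolding iota_def ..

lemma const_L2: "(\<lambda>t. c) \<in> L2 \<mu>"
  by (rule L2_const[OF finite_measure])

lemma iota_L2: "iota ip \<zeta> \<in> L2 \<mu>"
  unfolding iota_eq
  by (rule L2_of_bounded[OF finite_measure, where C="sqrt 2 * hnorm ip \<zeta>"])
    (auto simp: space_eq norm_ip_state_le)

lemma ip_L2: "ip \<zeta> \<in> L2 \<mu>"
  using iota_L2 by (simp add: iota_eq)

lemma L2norm_iota_le: "L2norm \<mu> (iota ip \<zeta>) \<le> sqrt 2 * hnorm ip \<zeta>"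
  using iota_L2 by (rule L2norm_le_of_bounded[OF prob_space]) (simp add: iota_eq space_eq norm_ip_state_le)

lemma L2norm_iota_le_of_perp: "ip \<zeta> e = 0 \<Longrightarrow> L2norm \<mu> (iota ip \<zeta>) \<le> hnorm ip \<zeta>"
  using iota_L2 by (rule L2norm_le_of_bounded[OF prob_space])
    (simp add: iota_eq space_eq norm_ip_state_le_of_perp)

lemma sum_L2norm_iota_square_le:
  assumes "finite F" and orthonormal: "\<forall>b\<in>F. \<forall>c\<in>F. ip b c = (if b = c then 1 else 0)"
  shows "(\<Sum>b\<in>F. (L2norm \<mu> (iota ip b))\<^sup>2) \<le> 2"
proof -
  have int: "integrable \<mu> (\<lambda>t. (cmod (ip b t))\<^sup>2)" for b
    using integrable_L2_square[OF iota_L2] by (simp add: iota_eq)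
  have "(\<Sum>b\<in>F. (L2norm \<mu> (iota ip b))\<^sup>2) = (\<integral>t. (\<Sum>b\<in>F. (cmod (ip b t))\<^sup>2) \<partial>\<mu>)"
    by (simp add: L2norm_square iota_eq Bochner_Integration.integral_sum[OF int])
  also have "\<dots> \<le> (\<integral>t. 2 \<partial>\<mu>)"
  proof (rule integral_mono)
    show "integrable \<mu> (\<lambda>t. \<Sum>b\<in>F. (cmod (ip b t))\<^sup>2)"
      by (rule Bochner_Integration.integrable_sum[OF int])
    show "integrable \<mu> (\<lambda>t. 2::real)"
      using finite_measure by (simp add: finite_measure.integrable_const)
    fix t assume t: "t \<in> space \<mu>"
    have "(\<Sum>b\<in>F. (cmod (ip b t))\<^sup>2) = (\<Sum>b\<in>F. (cmod (ip t b))\<^sup>2)"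
      by (intro sum.cong refl) (metis complex_mod_cnj ip_commute)
    also have "\<dots> \<le> (hnorm ip t)\<^sup>2" using \<open>finite F\<close> orthonormal by (rule bessel_inequality)
    also have "\<dots> \<le> 2" using t hnorm_state_square_le by (simp add: space_eq)
    finally show "(\<Sum>b\<in>F. (cmod (ip b t))\<^sup>2) \<le> 2" .
  qed
  also have "\<dots> = 2" using prob_space.prob_space[OF prob_space] by simp
  finally show ?thesis .
qed

lemma hilbert_schmidt_iota: "hilbert_schmidt_le ip \<mu> (iota ip) (sqrt 2)"
  unfolding hilbert_schmidt_le_def
proof (intro allI impI)
  fix B assume "orthonormal_basis ip B"
  then have "sum (\<lambda>b. (L2norm \<mu> (iota ip b))\<^sup>2) F \<le> 2" if "finite F" "F \<subseteq> B" for F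
    using that by (intro sum_L2norm_iota_square_le) (auto simp: orthonormal_basis_def subset_iff)
  moreover from this have "(\<lambda>b. (L2norm \<mu> (iota ip b))\<^sup>2) summable_on B"
    by (intro nonneg_bdd_above_summable_on bdd_aboveI[where M=2]) auto
  ultimately show "(\<lambda>b. (L2norm \<mu> (iota ip b))\<^sup>2) summable_on B \<and>
      (\<Sum>\<^sub>\<infinity>b\<in>B. (L2norm \<mu> (iota ip b))\<^sup>2) \<le> (sqrt 2)\<^sup>2"
    by (simp add: infsum_le_finite_sums)
qed

lemma AE_iota_e: "AE t in \<mu>. iota ip e t = 1"
  by (intro AE_I2) (simp add: iota_eq ip_e_state space_eq)

lemma AE_iota_star: "AE t in \<mu>. iota ip (star \<zeta>) t = cnj (iota ip \<zeta> t)"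
  by (intro AE_I2) (simp add: iota_eq ip_star_state space_eq)

lemma iota_herm_perp:
  assumes "\<zeta>0 \<in> herm_perp ip star e"
  shows "AE t in \<mu>. Im (iota ip \<zeta>0 t) = 0" and "L2inner \<mu> (iota ip \<zeta>0) (\<lambda>t. 1) = 0"
    and "L2norm \<mu> (iota ip \<zeta>0) \<le> hnorm ip \<zeta>0"
proof -
  have perp: "ip \<zeta>0 e = 0" and herm: "star \<zeta>0 = \<zeta>0"
    using assms by (auto simp: herm_perp_def)
  show "AE t in \<mu>. Im (iota ip \<zeta>0 t) = 0"
    using herm by (intro AE_I2) (simp add: iota_eq Im_ip_state space_eq)
  show "L2inner \<mu> (iota ip \<zeta>0) (\<lambda>t. 1) = 0"
    using perp by (simp add: L2inner_one iota_eq integral_ip)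
  show "L2norm \<mu> (iota ip \<zeta>0) \<le> hnorm ip \<zeta>0"
    using perp by (rule L2norm_iota_le_of_perp)
qed

lemma iota_cone:
  assumes "\<zeta> \<in> cone_e ip star e"
  shows "iota ip \<zeta> \<in> L2pos \<mu>"
proof -
  have herm: "star \<zeta> = \<zeta>" and cone: "hnorm ip \<zeta> \<le> sqrt 2 * Re (ip \<zeta> e)"
    using assms by (auto simp: cone_e_def)
  define c where "c = ip \<zeta> e"
  define \<zeta>0 where "\<zeta>0 = \<zeta> - sc c e"
  note decomposition = hermitian_decomposition[OF herm, folded c_def, folded \<zeta>0_def]
  have "0 \<le> sqrt 2 * Re c" using cone hnorm_nonneg[of \<zeta>] unfolding c_def by linarith
  then have Re_c: "0 \<le> Re c" by (simp add: zero_le_mult_iff)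
  have "(hnorm ip \<zeta>)\<^sup>2 \<le> 2 * (Re c)\<^sup>2"
    using power_mono[OF cone hnorm_nonneg, of 2] by (simp add: c_def power_mult_distrib)
  then have "(hnorm ip \<zeta>0)\<^sup>2 \<le> (Re c)\<^sup>2" using decomposition(3) by simp
  then have \<zeta>0_le: "hnorm ip \<zeta>0 \<le> Re c" using Re_c by (rule power2_le_imp_le)
  have iota_\<zeta>: "iota ip \<zeta> t = iota ip \<zeta>0 t + c" if "t \<in> space \<mu>" for t
    using that ip_add_left[of \<zeta>0 "sc c e" t]
    by (simp add: \<zeta>0_def iota_eq ip_scale_left ip_e_state space_eq)
  have mean: "(\<integral>s. iota ip \<zeta> s \<partial>\<mu>) = c" unfolding iota_eq c_def by (rule integral_ip)
  have "L2norm \<mu> (\<lambda>t. iota ip \<zeta> t - (\<integral>s. iota ip \<zeta> s \<partial>\<mu>)) = L2norm \<mu> (iota ip \<zeta>0)"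
    unfolding mean by (rule L2norm_cong) (simp add: iota_\<zeta>)
  also have "\<dots> \<le> Re (\<integral>s. iota ip \<zeta> s \<partial>\<mu>)"
    unfolding mean using iota_herm_perp(3)[OF decomposition(2)] \<zeta>0_le by linarith
  finally show ?thesis
    unfolding L2pos_def using iota_L2 iota_herm_perp(1)
    by (auto intro!: AE_I2 simp: iota_eq Im_ip_state space_eq herm)
qed

subsection \<open>The projection onto the closure of the range\<close>

lemma L2inner_cnj_iota:
  "L2inner \<mu> (\<lambda>t. cnj (h t)) (iota ip \<xi>) = cnj (L2inner \<mu> h (iota ip (star \<xi>)))"
proof -
  have "cnj (L2inner \<mu> h (iota ip (star \<xi>))) = (\<integral>t. cnj (h t * cnj (ip (star \<xi>) t)) \<partial>\<mu>)"
    unfolding L2inner_def iota_eq by (rule Bochner_Integration.integral_cnj[symmetric])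
  also have "\<dots> = L2inner \<mu> (\<lambda>t. cnj (h t)) (iota ip \<xi>)"
    unfolding L2inner_def iota_eq
    by (rule Bochner_Integration.integral_cong) (simp_all add: space_eq ip_star_state)
  finally show ?thesis ..
qed

lemma iota_range_closure_iff:
  "g \<in> iota_range_closure ip \<mu> \<longleftrightarrow> g \<in> L2 \<mu> \<and> (\<forall>\<epsilon>>0. \<exists>\<zeta>. L2norm \<mu> (\<lambda>t. g t - ip \<zeta> t) < \<epsilon>)"
  unfolding iota_range_closure_def iota_def by simp

lemma iota_range_closure_L2: "g \<in> iota_range_closure ip \<mu> \<Longrightarrow> g \<in> L2 \<mu>"
  by (simp add: iota_range_closure_iff)

lemma ip_in_iota_range_closure: "ip \<zeta> \<in> iota_range_closure ip \<mu>"
  unfolding iota_range_closure_iff using ip_L2 by (auto intro!: exI[of _ \<zeta>])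

lemma iota_range_closure_cong:
  assumes g: "g \<in> iota_range_closure ip \<mu>" and eq: "\<And>t. t \<in> space \<mu> \<Longrightarrow> g t = g' t"
  shows "g' \<in> iota_range_closure ip \<mu>"
proof -
  have "L2norm \<mu> (\<lambda>t. g' t - ip z t) = L2norm \<mu> (\<lambda>t. g t - ip z t)" for z
    by (rule L2norm_cong) (simp add: eq)
  moreover have "g' \<in> L2 \<mu>" by (rule L2_cong[OF eq iota_range_closure_L2[OF g]])
  ultimately show ?thesis using g unfolding iota_range_closure_iff by simp
qed

lemma iota_range_closure_add:
  assumes "g1 \<in> iota_range_closure ip \<mu>" "g2 \<in> iota_range_closure ip \<mu>"
  shows "(\<lambda>t. g1 t + g2 t) \<in> iota_range_closure ip \<mu>"
  unfolding iota_range_closure_iff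
proof (intro conjI allI impI)
  show "(\<lambda>t. g1 t + g2 t) \<in> L2 \<mu>" using assms iota_range_closure_L2 L2_add by blast
  fix \<epsilon> :: real assume "\<epsilon> > 0"
  then obtain z1 z2 where z1: "L2norm \<mu> (\<lambda>t. g1 t - ip z1 t) < \<epsilon>/2"
    and z2: "L2norm \<mu> (\<lambda>t. g2 t - ip z2 t) < \<epsilon>/2"
    using assms unfolding iota_range_closure_iff by (meson half_gt_zero)
  have "L2norm \<mu> (\<lambda>t. (g1 t - ip z1 t) + (g2 t - ip z2 t)) \<le>
      L2norm \<mu> (\<lambda>t. g1 t - ip z1 t) + L2norm \<mu> (\<lambda>t. g2 t - ip z2 t)"
    using assms iota_range_closure_L2 ip_L2 by (intro L2norm_triangle L2_diff) auto
  then have "L2norm \<mu> (\<lambda>t. (g1 t - ip z1 t) + (g2 t - ip z2 t)) < \<epsilon>"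
    using z1 z2 by simp
  then show "\<exists>\<zeta>. L2norm \<mu> (\<lambda>t. g1 t + g2 t - ip \<zeta> t) < \<epsilon>"
    by (intro exI[of _ "z1 + z2"]) (simp add: ip_add_left algebra_simps)
qed

lemma iota_range_closure_scale:
  assumes "g \<in> iota_range_closure ip \<mu>"
  shows "(\<lambda>t. c * g t) \<in> iota_range_closure ip \<mu>"
  unfolding iota_range_closure_iff
proof (intro conjI allI impI)
  show "(\<lambda>t. c * g t) \<in> L2 \<mu>" using assms iota_range_closure_L2 L2_scale by blast
  fix \<epsilon> :: real assume "\<epsilon> > 0"
  then have "\<epsilon> / (cmod c + 1) > 0" by (simp add: add_nonneg_pos)
  then obtain z where z: "L2norm \<mu> (\<lambda>t. g t - ip z t) < \<epsilon> / (cmod c + 1)"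
    using assms unfolding iota_range_closure_iff by blast
  have "L2norm \<mu> (\<lambda>t. c * g t - ip (sc c z) t) = cmod c * L2norm \<mu> (\<lambda>t. g t - ip z t)"
    using L2norm_scale[of \<mu> c "\<lambda>t. g t - ip z t"] by (simp add: ip_scale_left algebra_simps)
  also have "\<dots> \<le> cmod c * (\<epsilon> / (cmod c + 1))" using z by (intro mult_left_mono) auto
  also have "\<dots> = \<epsilon> * (cmod c / (cmod c + 1))" by simp
  also have "\<dots> < \<epsilon> * 1" using \<open>\<epsilon> > 0\<close> by (intro mult_strict_left_mono) (simp_all add: divide_less_eq add_nonneg_pos)
  finally show "\<exists>\<zeta>. L2norm \<mu> (\<lambda>t. c * g t - ip \<zeta> t) < \<epsilon>" by auto
qed

lemma iota_range_closure_diff: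
  "g1 \<in> iota_range_closure ip \<mu> \<Longrightarrow> g2 \<in> iota_range_closure ip \<mu> \<Longrightarrow>
    (\<lambda>t. g1 t - g2 t) \<in> iota_range_closure ip \<mu>"
  using iota_range_closure_add[OF _ iota_range_closure_scale, of g1 g2 "- 1"] by simp

lemma const_in_iota_range_closure: "(\<lambda>t. c) \<in> iota_range_closure ip \<mu>"
  by (rule iota_range_closure_cong[OF ip_in_iota_range_closure[of "sc c e"]])
    (simp add: ip_scale_left ip_e_state space_eq)

lemma iota_range_closure_cnj:
  assumes "g \<in> iota_range_closure ip \<mu>"
  shows "(\<lambda>t. cnj (g t)) \<in> iota_range_closure ip \<mu>"
  unfolding iota_range_closure_iff
proof (intro conjI allI impI)
  show "(\<lambda>t. cnj (g t)) \<in> L2 \<mu>" using assms iota_range_closure_L2 L2_cnj by blast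
  fix \<epsilon> :: real assume "\<epsilon> > 0"
  then obtain z where z: "L2norm \<mu> (\<lambda>t. g t - ip z t) < \<epsilon>"
    using assms unfolding iota_range_closure_iff by blast
  have "L2norm \<mu> (\<lambda>t. cnj (g t) - ip (star z) t) = L2norm \<mu> (\<lambda>t. cnj (g t - ip z t))"
    by (rule L2norm_cong) (simp add: space_eq ip_star_state)
  also have "\<dots> = L2norm \<mu> (\<lambda>t. g t - ip z t)" by (rule L2norm_cnj)
  finally show "\<exists>\<zeta>. L2norm \<mu> (\<lambda>t. cnj (g t) - ip \<zeta> t) < \<epsilon>"
    using z by (intro exI[of _ "star z"]) simp
qed

lemma L2inner_iota_range_closure_eq_0:
  assumes h: "h \<in> L2 \<mu>" and orthogonal: "\<And>\<zeta>. L2inner \<mu> h (ip \<zeta>) = 0"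
    and g: "g \<in> iota_range_closure ip \<mu>"
  shows "L2inner \<mu> h g = 0"
proof -
  have "cmod (L2inner \<mu> h g) \<le> 0 + \<epsilon>" if "\<epsilon> > 0" for \<epsilon>
  proof -
    have "\<epsilon> / (L2norm \<mu> h + 1) > 0" using that L2norm_nonneg[of \<mu> h] by simp
    then obtain z where z: "L2norm \<mu> (\<lambda>t. g t - ip z t) < \<epsilon> / (L2norm \<mu> h + 1)"
      using g unfolding iota_range_closure_iff by blast
    have "L2inner \<mu> h g = L2inner \<mu> h (\<lambda>t. g t - ip z t)"
      using L2inner_diff_right[OF iota_range_closure_L2[OF g] ip_L2 h] orthogonal[of z] by simp
    also have "cmod \<dots> \<le> L2norm \<mu> h * L2norm \<mu> (\<lambda>t. g t - ip z t)"
      using g h ip_L2 iota_range_closure_L2 by (intro L2inner_Cauchy_Schwarz L2_diff) auto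
    also have "\<dots> \<le> L2norm \<mu> h * (\<epsilon> / (L2norm \<mu> h + 1))"
      using z L2norm_nonneg by (intro mult_left_mono) auto
    also have "\<dots> \<le> \<epsilon>" using that L2norm_nonneg[of \<mu> h] by (simp add: field_simps)
    finally show ?thesis by simp
  qed
  then show ?thesis using field_le_epsilon[of "cmod (L2inner \<mu> h g)" 0] by simp
qed

lemma iota_range_closure_of_tendsto:
  assumes "g \<in> L2 \<mu>" and "(\<lambda>n. L2norm \<mu> (\<lambda>t. g t - ip (z n) t)) \<longlonglongrightarrow> 0"
  shows "g \<in> iota_range_closure ip \<mu>"
  unfolding iota_range_closure_iff
proof (intro conjI allI impI assms(1))
  fix \<epsilon> :: real assume "\<epsilon> > 0"
  then obtain N where "\<forall>n\<ge>N. norm (L2norm \<mu> (\<lambda>t. g t - ip (z n) t) - 0) < \<epsilon>"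
    using LIMSEQ_D[OF assms(2)] by blast
  then have "L2norm \<mu> (\<lambda>t. g t - ip (z N) t) < \<epsilon>" by auto
  then show "\<exists>\<zeta>. L2norm \<mu> (\<lambda>t. g t - ip \<zeta> t) < \<epsilon>" by blast
qed

lemma L2norm_diff_iota_range_closure_ge:
  assumes f: "f \<in> L2 \<mu>" and lower: "\<And>\<zeta>. a \<le> L2norm \<mu> (\<lambda>t. f t - ip \<zeta> t)"
    and k: "k \<in> iota_range_closure ip \<mu>"
  shows "a \<le> L2norm \<mu> (\<lambda>t. f t - k t)"
proof (rule field_le_epsilon)
  fix \<epsilon> :: real assume "\<epsilon> > 0"
  then obtain \<zeta> where \<zeta>: "L2norm \<mu> (\<lambda>t. k t - ip \<zeta> t) < \<epsilon>"
    using k unfolding iota_range_closure_iff by blast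
  have "a \<le> L2norm \<mu> (\<lambda>t. (f t - k t) + (k t - ip \<zeta> t))" using lower[of \<zeta>] by simp
  also have "\<dots> \<le> L2norm \<mu> (\<lambda>t. f t - k t) + L2norm \<mu> (\<lambda>t. k t - ip \<zeta> t)"
    using f k iota_range_closure_L2 ip_L2 by (intro L2norm_triangle L2_diff) auto
  finally show "a \<le> L2norm \<mu> (\<lambda>t. f t - k t) + \<epsilon>" using \<zeta> by simp
qed

lemma L2norm_iota_diff_of_near_minimizers:
  assumes f: "f \<in> L2 \<mu>" and lower: "\<And>w. d \<le> (L2norm \<mu> (\<lambda>t. f t - ip w t))\<^sup>2"
  shows "(L2norm \<mu> (\<lambda>t. ip y t - ip x t))\<^sup>2 \<le>
    2 * ((L2norm \<mu> (\<lambda>t. f t - ip x t))\<^sup>2 - d) + 2 * ((L2norm \<mu> (\<lambda>t. f t - ip y t))\<^sup>2 - d)"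
proof -
  \<comment> \<open>the parallelogram law at the midpoint \<open>w\<close> of \<open>x\<close> and \<open>y\<close>\<close>
  define w where "w = sc (1/2) (x + y)"
  have f_x: "(\<lambda>t. f t - ip x t) \<in> L2 \<mu>" and f_y: "(\<lambda>t. f t - ip y t) \<in> L2 \<mu>"
    using f ip_L2 by (auto intro: L2_diff)
  have "L2norm \<mu> (\<lambda>t. (f t - ip x t) + (f t - ip y t)) = L2norm \<mu> (\<lambda>t. 2 * (f t - ip w t))"
    unfolding w_def by (simp add: ip_scale_left ip_add_left algebra_simps)
  also have "\<dots> = 2 * L2norm \<mu> (\<lambda>t. f t - ip w t)" by (simp only: L2norm_scale) simp
  finally have "(L2norm \<mu> (\<lambda>t. (f t - ip x t) + (f t - ip y t)))\<^sup>2 = 4 * (L2norm \<mu> (\<lambda>t. f t - ip w t))\<^sup>2"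
    by (simp add: power_mult_distrib)
  moreover have "(\<lambda>t. (f t - ip x t) - (f t - ip y t)) = (\<lambda>t. ip y t - ip x t)" by auto
  ultimately show ?thesis
    using L2norm_parallelogram[OF f_x f_y] lower[of w] by simp
qed

lemma iota_range_closure_nearest:
  assumes f: "f \<in> L2 \<mu>"
  obtains g where "g \<in> iota_range_closure ip \<mu>"
    and "\<And>k. k \<in> iota_range_closure ip \<mu> \<Longrightarrow> L2norm \<mu> (\<lambda>t. f t - g t) \<le> L2norm \<mu> (\<lambda>t. f t - k t)"
proof -
  define D where "D z = (L2norm \<mu> (\<lambda>t. f t - ip z t))\<^sup>2" for z
  define d where "d = Inf (range D)"
  have bdd: "bdd_below (range D)" unfolding D_def by (intro bdd_belowI[where m=0]) auto
  have d_le: "d \<le> D z" for z unfolding d_def using bdd by (intro cInf_lower) auto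
  have "\<forall>n. \<exists>z. D z < d + (1/4)^n"
  proof
    fix n :: nat
    have "Inf (range D) < d + (1/4)^n" unfolding d_def by simp
    then show "\<exists>z. D z < d + (1/4)^n" using cInf_less_iff[OF _ bdd] by auto
  qed
  then obtain z where z: "\<And>n. D (z n) < d + (1/4)^n" by metis
  have Cauchy: "(L2norm \<mu> (\<lambda>t. ip (z m) t - ip (z n) t))\<^sup>2 \<le> 2 * (1/4)^n + 2 * (1/4)^m" for n m
    using L2norm_iota_diff_of_near_minimizers[OF f d_le[unfolded D_def], where x="z n" and y="z m"]
      z[of n] z[of m] unfolding D_def by simp
  have "L2norm \<mu> (\<lambda>t. ip (z (Suc n)) t - ip (z n) t) \<le> 2 * (1/2)^n" for n
  proof (rule power2_le_imp_le)
    have "(L2norm \<mu> (\<lambda>t. ip (z (Suc n)) t - ip (z n) t))\<^sup>2 \<le> 2 * (1/4)^n + 2 * (1/4)^(Suc n)"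
      by (rule Cauchy)
    also have "\<dots> \<le> (2 * (1/2)^n)\<^sup>2" by (simp add: power2_eq_square power_mult_distrib[symmetric])
    finally show "(L2norm \<mu> (\<lambda>t. ip (z (Suc n)) t - ip (z n) t))\<^sup>2 \<le> (2 * (1/2)^n)\<^sup>2" .
  qed simp
  then obtain g where g: "g \<in> L2 \<mu>" and g_lim: "(\<lambda>n. L2norm \<mu> (\<lambda>t. g t - ip (z n) t)) \<longlonglongrightarrow> 0"
    using L2_limit_of_geometric_Cauchy[of "\<lambda>n. ip (z n)" \<mu>] ip_L2 by blast
  have lower: "sqrt d \<le> L2norm \<mu> (\<lambda>t. f t - k t)" if "k \<in> iota_range_closure ip \<mu>" for k
    using f _ that
  proof (rule L2norm_diff_iota_range_closure_ge)
    show "sqrt d \<le> L2norm \<mu> (\<lambda>t. f t - ip \<zeta> t)" for \<zeta>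
      using d_le[of \<zeta>] by (simp add: D_def L2norm_nonneg real_le_lsqrt)
  qed
  have "(\<lambda>n. sqrt (d + (1/4)^n)) \<longlonglongrightarrow> sqrt (d + 0)"
    by (intro tendsto_intros LIMSEQ_power_zero) simp
  moreover have "L2norm \<mu> (\<lambda>t. f t - ip (z n) t) \<le> sqrt (d + (1/4)^n)" for n
    using z[of n] unfolding D_def by (simp add: L2norm_nonneg real_le_rsqrt)
  ultimately have "L2norm \<mu> (\<lambda>t. f t - g t) \<le> sqrt d"
    using L2norm_diff_le_of_tendsto[OF f g ip_L2 g_lim] by simp
  then show ?thesis
    using that iota_range_closure_of_tendsto[OF g g_lim] lower order_trans by blast
qed

lemma projection_exists:
  assumes f: "f \<in> L2 \<mu>"
  obtains g where "is_P_image ip \<mu> f g"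
proof -
  obtain g where g: "g \<in> iota_range_closure ip \<mu>"
    and nearest: "\<And>k. k \<in> iota_range_closure ip \<mu> \<Longrightarrow> L2norm \<mu> (\<lambda>t. f t - g t) \<le> L2norm \<mu> (\<lambda>t. f t - k t)"
    using iota_range_closure_nearest[OF f] by blast
  have f_g: "(\<lambda>t. f t - g t) \<in> L2 \<mu>" using f g iota_range_closure_L2 L2_diff by blast
  have "L2inner \<mu> (\<lambda>t. f t - g t) (iota ip \<xi>) = 0" for \<xi>
  proof (rule first_variation_eq_0)
    fix s :: complex
    have "(\<lambda>t. g t + s * ip \<xi> t) \<in> iota_range_closure ip \<mu>"
      by (intro iota_range_closure_add g iota_range_closure_scale ip_in_iota_range_closure)
    then have "L2norm \<mu> (\<lambda>t. f t - g t) \<le> L2norm \<mu> (\<lambda>t. (f t - g t) - s * iota ip \<xi> t)"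
      using nearest by (simp add: iota_eq algebra_simps)
    then have "(L2norm \<mu> (\<lambda>t. f t - g t))\<^sup>2 \<le> (L2norm \<mu> (\<lambda>t. (f t - g t) - s * iota ip \<xi> t))\<^sup>2"
      using L2norm_nonneg by (intro power_mono)
    then show "0 \<le> - 2 * Re (cnj s * L2inner \<mu> (\<lambda>t. f t - g t) (iota ip \<xi>))
        + (cmod s)\<^sup>2 * (L2norm \<mu> (iota ip \<xi>))\<^sup>2"
      by (simp add: L2norm_diff_scale_square[OF f_g iota_L2])
  qed simp
  then show ?thesis using that g unfolding is_P_image_def by blast
qed

lemma projection_self: "h \<in> iota_range_closure ip \<mu> \<Longrightarrow> is_P_image ip \<mu> h h"
  unfolding is_P_image_def L2inner_def by simp

lemma projection_unique:
  assumes f: "f \<in> L2 \<mu>" and P1: "is_P_image ip \<mu> f g1" and P2: "is_P_image ip \<mu> f g2"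
  shows "AE t in \<mu>. g1 t = g2 t"
proof -
  have g1: "g1 \<in> iota_range_closure ip \<mu>" and g2: "g2 \<in> iota_range_closure ip \<mu>"
    using P1 P2 by (auto simp: is_P_image_def)
  define h where "h t = g1 t - g2 t" for t
  have h: "h \<in> iota_range_closure ip \<mu>"
    unfolding h_def[abs_def] using g1 g2 by (rule iota_range_closure_diff)
  have "L2inner \<mu> h (ip \<zeta>) = 0" for \<zeta>
  proof -
    have "h = (\<lambda>t. (f t - g2 t) - (f t - g1 t))" unfolding h_def by auto
    then have "L2inner \<mu> h (ip \<zeta>) = L2inner \<mu> (\<lambda>t. f t - g2 t) (ip \<zeta>) - L2inner \<mu> (\<lambda>t. f t - g1 t) (ip \<zeta>)"
      using f g1 g2 iota_range_closure_L2 ip_L2 by (simp add: L2inner_diff_left L2_diff)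
    then show ?thesis using P1 P2 by (simp add: is_P_image_def iota_eq)
  qed
  then have "L2inner \<mu> h h = 0"
    by (rule L2inner_iota_range_closure_eq_0[OF iota_range_closure_L2[OF h] _ h])
  then have "AE t in \<mu>. h t = 0"
    using AE_eq_0_of_L2norm_eq_0[OF iota_range_closure_L2[OF h]] by (simp add: L2inner_self)
  then show ?thesis unfolding h_def by simp
qed

lemma projection_cnj:
  assumes f: "f \<in> L2 \<mu>" and real: "AE t in \<mu>. Im (f t) = 0" and P: "is_P_image ip \<mu> f g"
  shows "is_P_image ip \<mu> f (\<lambda>t. cnj (g t))"
proof -
  have g: "g \<in> iota_range_closure ip \<mu>" and orthogonal: "\<And>\<zeta>. L2inner \<mu> (\<lambda>t. f t - g t) (iota ip \<zeta>) = 0"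
    using P by (auto simp: is_P_image_def)
  have [measurable]: "f \<in> borel_measurable \<mu>" "g \<in> borel_measurable \<mu>"
    using f g iota_range_closure_L2 L2_measurable by blast+
  have "L2inner \<mu> (\<lambda>t. f t - cnj (g t)) (iota ip \<zeta>) = 0" for \<zeta>
  proof -
    have "AE t in \<mu>. f t - cnj (g t) = cnj (f t - g t)"
      using real by eventually_elim (simp add: complex_eq_iff)
    then have "L2inner \<mu> (\<lambda>t. f t - cnj (g t)) (iota ip \<zeta>) = L2inner \<mu> (\<lambda>t. cnj (f t - g t)) (iota ip \<zeta>)"
      by (rule L2inner_cong_AE) (auto simp: iota_eq)
    also have "\<dots> = cnj (L2inner \<mu> (\<lambda>t. f t - g t) (iota ip (star \<zeta>)))"
      by (rule L2inner_cnj_iota)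
    also have "\<dots> = 0" using orthogonal by simp
    finally show ?thesis .
  qed
  then show ?thesis using iota_range_closure_cnj[OF g] by (simp add: is_P_image_def)
qed

lemma projection_of_one:
  assumes "is_P_image ip \<mu> (\<lambda>t. 1) g"
  shows "AE t in \<mu>. g t = 1"
  using projection_unique[OF const_L2 assms projection_self[OF const_in_iota_range_closure]] .

lemma projection_L2pos:
  assumes f: "f \<in> L2pos \<mu>" and P: "is_P_image ip \<mu> f g"
  shows "g \<in> L2pos \<mu>"
proof -
  have f_L2: "f \<in> L2 \<mu>" and real: "AE t in \<mu>. Im (f t) = 0"
    and f_cone: "L2norm \<mu> (\<lambda>t. f t - (\<integral>s. f s \<partial>\<mu>)) \<le> Re (\<integral>s. f s \<partial>\<mu>)"
    using f unfolding L2pos_def by auto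
  have g: "g \<in> iota_range_closure ip \<mu>" and orthogonal: "\<And>\<zeta>. L2inner \<mu> (\<lambda>t. f t - g t) (ip \<zeta>) = 0"
    using P by (auto simp: is_P_image_def iota_eq)
  have g_L2: "g \<in> L2 \<mu>" using g by (rule iota_range_closure_L2)
  have f_g: "(\<lambda>t. f t - g t) \<in> L2 \<mu>" using f_L2 g_L2 by (rule L2_diff)
  have "AE t in \<mu>. g t = cnj (g t)"
    by (rule projection_unique[OF f_L2 P projection_cnj[OF f_L2 real P]])
  then have g_real: "AE t in \<mu>. Im (g t) = 0"
    by eventually_elim (metis cnj.sel(2) neg_equal_zero)
  define c where "c = (\<integral>s. g s \<partial>\<mu>)"
  \<comment> \<open>\<open>f - g\<close> is orthogonal to the constants (which lie in the range of \<open>iota\<close>), so both have mean \<open>c\<close>\<close>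
  have "L2inner \<mu> (\<lambda>t. f t - g t) (\<lambda>t. 1) = L2inner \<mu> (\<lambda>t. f t - g t) (ip e)"
    by (rule L2inner_cong) (simp_all add: space_eq ip_e_state)
  then have "(\<integral>t. f t - g t \<partial>\<mu>) = 0" using orthogonal by (simp add: L2inner_one)
  then have mean: "(\<integral>s. f s \<partial>\<mu>) = c"
    unfolding c_def using integrable_of_L2[OF finite_measure] f_L2 g_L2 by simp
  have g_c: "(\<lambda>t. g t - c) \<in> iota_range_closure ip \<mu>"
    by (intro iota_range_closure_diff g const_in_iota_range_closure)
  have "L2inner \<mu> (\<lambda>t. f t - g t) (\<lambda>t. g t - c) = 0"
    using f_g orthogonal g_c by (rule L2inner_iota_range_closure_eq_0)
  then have "(L2norm \<mu> (\<lambda>t. f t - c))\<^sup>2 = (L2norm \<mu> (\<lambda>t. f t - g t))\<^sup>2 + (L2norm \<mu> (\<lambda>t. g t - c))\<^sup>2"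
    using L2norm_diff_scale_square[OF f_g iota_range_closure_L2[OF g_c], of "- 1"] by simp
  then have "(L2norm \<mu> (\<lambda>t. g t - c))\<^sup>2 \<le> (L2norm \<mu> (\<lambda>t. f t - c))\<^sup>2" by simp
  then have "L2norm \<mu> (\<lambda>t. g t - c) \<le> L2norm \<mu> (\<lambda>t. f t - c)"
    using L2norm_nonneg by (rule power2_le_imp_le)
  also have "\<dots> \<le> Re c" using f_cone unfolding mean .
  finally show ?thesis unfolding L2pos_def c_def using g_L2 g_real by simp
qed

subsection \<open>The adjoint\<close>

lemma iota_adjoint_exists:
  assumes g: "g \<in> L2 \<mu>"
  obtains \<zeta> where "is_iota_adj ip \<mu> g \<zeta>"
proof -
  have add: "L2inner \<mu> (iota ip (x + y)) g = L2inner \<mu> (iota ip x) g + L2inner \<mu> (iota ip y) g" for x y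
  proof -
    have "ip (x + y) = (\<lambda>t. ip x t + ip y t)" by (rule ext) (rule ip_add_left)
    then show ?thesis using L2inner_add_left[OF iota_L2 iota_L2 g, of x y] by (simp add: iota_eq)
  qed
  have scale: "L2inner \<mu> (iota ip (sc a x)) g = a * L2inner \<mu> (iota ip x) g" for a x
  proof -
    have "ip (sc a x) = (\<lambda>t. a * ip x t)" by (rule ext) (rule ip_scale_left)
    then show ?thesis using L2inner_scale_left[of \<mu> a "ip x" g] by (simp add: iota_eq)
  qed
  have bounded: "cmod (L2inner \<mu> (iota ip x) g) \<le> (sqrt 2 * L2norm \<mu> g) * hnorm ip x" for x
  proof -
    have "cmod (L2inner \<mu> (iota ip x) g) \<le> L2norm \<mu> (iota ip x) * L2norm \<mu> g"
      using iota_L2 g by (rule L2inner_Cauchy_Schwarz)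
    also have "\<dots> \<le> sqrt 2 * hnorm ip x * L2norm \<mu> g"
      using L2norm_iota_le L2norm_nonneg by (rule mult_right_mono)
    finally show ?thesis by (simp add: mult_ac)
  qed
  obtain \<zeta> where "\<And>x. ip x \<zeta> = L2inner \<mu> (iota ip x) g"
    using riesz_representation[OF add scale bounded] by blast
  then have "ip \<zeta> \<xi> = L2inner \<mu> g (iota ip \<xi>)" for \<xi>
    using ip_commute[of \<xi> \<zeta>] L2inner_commute[of \<mu> g "iota ip \<xi>"] by simp
  then show ?thesis using that unfolding is_iota_adj_def by blast
qed

lemma iota_adjoint_one: "is_iota_adj ip \<mu> (\<lambda>t. 1) e"
  unfolding is_iota_adj_def L2inner_def iota_eq
  using integral_ip ip_commute[of e] by simp

lemma iota_adjoint_hermitian: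
  assumes g: "g \<in> L2 \<mu>" and real: "AE t in \<mu>. Im (g t) = 0" and adj: "is_iota_adj ip \<mu> g \<zeta>"
  shows "star \<zeta> = \<zeta>"
proof -
  have [measurable]: "g \<in> borel_measurable \<mu>" using g by (rule L2_measurable)
  have adj: "ip \<zeta> \<xi> = L2inner \<mu> g (iota ip \<xi>)" for \<xi>
    using adj unfolding is_iota_adj_def by blast
  have "ip (star \<zeta>) \<xi> = ip \<zeta> \<xi>" for \<xi>
  proof -
    have "ip (star \<zeta>) \<xi> = cnj (L2inner \<mu> g (iota ip (star \<xi>)))"
      using ip_star[of \<zeta> "star \<xi>"] by (simp add: star_star adj)
    also have "\<dots> = L2inner \<mu> (\<lambda>t. cnj (g t)) (iota ip \<xi>)" by (rule L2inner_cnj_iota[symmetric])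
    also have "\<dots> = L2inner \<mu> g (iota ip \<xi>)"
      using real by (intro L2inner_cong_AE) (auto simp: iota_eq complex_eq_iff elim!: AE_mp)
    finally show ?thesis by (simp add: adj)
  qed
  then have "ip (star \<zeta> - \<zeta>) (star \<zeta> - \<zeta>) = 0" by (simp add: ip_diff_left)
  then have "star \<zeta> - \<zeta> = 0" by (rule ip_self_eq_0D)
  then show ?thesis by simp
qed

lemma norm_ip_iota_adjoint_perp_le:
  assumes g: "g \<in> L2 \<mu>" and adj: "is_iota_adj ip \<mu> g \<zeta>" and perp: "ip \<zeta>0 e = 0"
  shows "cmod (ip \<zeta> \<zeta>0) \<le> L2norm \<mu> (\<lambda>t. g t - (\<integral>s. g s \<partial>\<mu>)) * hnorm ip \<zeta>0"
proof -
  define c where "c = (\<integral>s. g s \<partial>\<mu>)"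
  have g_c: "(\<lambda>t. g t - c) \<in> L2 \<mu>" using g const_L2 by (rule L2_diff)
  \<comment> \<open>\<open>\<zeta>0 \<perp> e\<close> makes the constant part of \<open>g\<close> invisible\<close>
  have "L2inner \<mu> (\<lambda>t. c) (iota ip \<zeta>0) = 0"
    using integral_ip[of \<zeta>0] perp by (simp add: L2inner_def iota_eq)
  then have "ip \<zeta> \<zeta>0 = L2inner \<mu> (\<lambda>t. g t - c) (iota ip \<zeta>0)"
    using adj L2inner_diff_left[OF g const_L2 iota_L2, of c \<zeta>0] by (simp add: is_iota_adj_def)
  also have "cmod \<dots> \<le> L2norm \<mu> (\<lambda>t. g t - c) * L2norm \<mu> (iota ip \<zeta>0)"
    using g_c iota_L2 by (rule L2inner_Cauchy_Schwarz)
  also have "\<dots> \<le> L2norm \<mu> (\<lambda>t. g t - c) * hnorm ip \<zeta>0"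
    using perp by (intro mult_left_mono L2norm_iota_le_of_perp L2norm_nonneg)
  finally show ?thesis unfolding c_def .
qed

lemma iota_adjoint_cone:
  assumes g_pos: "g \<in> L2pos \<mu>" and adj: "is_iota_adj ip \<mu> g \<zeta>"
  shows "\<zeta> \<in> cone_e ip star e"
proof -
  have g: "g \<in> L2 \<mu>" and real: "AE t in \<mu>. Im (g t) = 0"
    and g_cone: "L2norm \<mu> (\<lambda>t. g t - (\<integral>s. g s \<partial>\<mu>)) \<le> Re (\<integral>s. g s \<partial>\<mu>)"
    using g_pos unfolding L2pos_def by auto
  have herm: "star \<zeta> = \<zeta>" using g real adj by (rule iota_adjoint_hermitian)
  define c where "c = ip \<zeta> e"
  define \<zeta>0 where "\<zeta>0 = \<zeta> - sc c e"
  note decomposition = hermitian_decomposition[OF herm, folded c_def, folded \<zeta>0_def]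
  have perp: "ip \<zeta>0 e = 0" using decomposition(2) by (simp add: herm_perp_def)
  have "L2inner \<mu> g (ip e) = L2inner \<mu> g (\<lambda>t. 1)"
    by (rule L2inner_cong) (simp_all add: space_eq ip_e_state)
  then have "c = L2inner \<mu> g (\<lambda>t. 1)"
    using adj unfolding c_def is_iota_adj_def iota_eq by simp
  then have mean: "c = (\<integral>s. g s \<partial>\<mu>)" by (simp add: L2inner_one)
  define m where "m = Re c"
  have m: "0 \<le> m" using g_cone L2norm_nonneg[of \<mu>] unfolding m_def mean by (metis order_trans)
  have "ip \<zeta>0 \<zeta>0 = ip \<zeta> \<zeta>0"
    using perp ip_commute[of \<zeta>0 e] by (simp add: \<zeta>0_def ip_diff_left ip_scale_left)
  then have "(hnorm ip \<zeta>0)\<^sup>2 \<le> cmod (ip \<zeta> \<zeta>0)"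
    using complex_Re_le_cmod[of "ip \<zeta>0 \<zeta>0"] by (simp add: hnorm_square)
  also have "\<dots> \<le> m * hnorm ip \<zeta>0"
    using norm_ip_iota_adjoint_perp_le[OF g adj perp] g_cone hnorm_nonneg[of \<zeta>0]
    unfolding m_def mean by (meson mult_right_mono order_trans)
  finally have "hnorm ip \<zeta>0 \<le> m"
    using m hnorm_nonneg[of \<zeta>0] by (cases "hnorm ip \<zeta>0 = 0") (auto simp: power2_eq_square)
  then have "(hnorm ip \<zeta>)\<^sup>2 \<le> (sqrt 2 * m)\<^sup>2"
    using decomposition(3) power_mono[OF _ hnorm_nonneg, of \<zeta>0 m 2]
    by (simp add: m_def power_mult_distrib)
  then have "hnorm ip \<zeta> \<le> sqrt 2 * m" by (rule power2_le_imp_le) (simp add: m)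
  then show ?thesis unfolding cone_e_def m_def c_def using herm by simp
qed

end

theorem mainTheorem20:
  fixes sc :: "complex \<Rightarrow> 'h::ab_group_add \<Rightarrow> 'h"
    and ip :: "'h \<Rightarrow> 'h \<Rightarrow> complex"
    and star :: "'h \<Rightarrow> 'h"
    and e :: 'h
    and \<mu> :: "'h measure"
  assumes H: "unital_hilbert_space sc ip star e"
    and mu: "unital_measure ip star e \<mu>"
  shows "(\<forall>\<zeta>. iota ip \<zeta> \<in> L2 \<mu>)
    \<and> hilbert_schmidt_le ip \<mu> (iota ip) (sqrt 2)
    \<and> (AE t in \<mu>. iota ip e t = 1)
    \<and> (\<forall>\<zeta>. AE t in \<mu>. iota ip (star \<zeta>) t = cnj (iota ip \<zeta> t))
    \<and> (\<forall>\<zeta>0 \<in> herm_perp ip star e. hnorm ip \<zeta>0 \<le> 1 \<longrightarrow>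
          (AE t in \<mu>. Im (iota ip \<zeta>0 t) = 0)
          \<and> L2inner \<mu> (iota ip \<zeta>0) (\<lambda>t. 1) = 0
          \<and> L2norm \<mu> (iota ip \<zeta>0) \<le> 1)
    \<and> (\<forall>\<zeta> \<in> cone_e ip star e. iota ip \<zeta> \<in> L2pos \<mu>)
    \<and> (\<forall>g. is_P_image ip \<mu> (\<lambda>t. 1) g \<longrightarrow> (AE t in \<mu>. g t = 1))
    \<and> (\<forall>f \<in> L2pos \<mu>. (\<exists>g. is_P_image ip \<mu> f g)
          \<and> (\<forall>g. is_P_image ip \<mu> f g \<longrightarrow> g \<in> L2pos \<mu>))
    \<and> is_iota_adj ip \<mu> (\<lambda>t. 1) e
    \<and> (\<forall>g \<in> L2pos \<mu>. \<exists>\<zeta> \<in> cone_e ip star e. is_iota_adj ip \<mu> g \<zeta>)"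
proof -
  interpret unital_measure_space sc ip star e \<mu>
    using H mu by unfold_locales
  have herm_perp_part: "(AE t in \<mu>. Im (iota ip \<zeta>0 t) = 0) \<and> L2inner \<mu> (iota ip \<zeta>0) (\<lambda>t. 1) = 0
      \<and> L2norm \<mu> (iota ip \<zeta>0) \<le> 1" if "\<zeta>0 \<in> herm_perp ip star e" "hnorm ip \<zeta>0 \<le> 1" for \<zeta>0
    using iota_herm_perp[OF that(1)] that(2) by simp
  have adjoint_part: "\<exists>\<zeta> \<in> cone_e ip star e. is_iota_adj ip \<mu> g \<zeta>" if "g \<in> L2pos \<mu>" for g
  proof -
    have "g \<in> L2 \<mu>" using that by (simp add: L2pos_def)
    then obtain \<zeta> where "is_iota_adj ip \<mu> g \<zeta>" by (rule iota_adjoint_exists)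
    then show ?thesis using iota_adjoint_cone[OF that] by blast
  qed
  have "\<exists>g. is_P_image ip \<mu> f g" if "f \<in> L2pos \<mu>" for f
    using that projection_exists[of f] by (auto simp: L2pos_def)
  then show ?thesis
    using iota_L2 hilbert_schmidt_iota AE_iota_e AE_iota_star herm_perp_part iota_cone
      projection_of_one projection_L2pos iota_adjoint_one adjoint_part
    by simp
qed

end
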